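(* Let $T$ be a c.n.u. contraction on $H$ and let $(H_+,H_-,\Gamma_+,\Gamma_-)$ be a boundary quadruple for $A_T^{\perp_s}$ with contractive Weyl function $B$. Then the localized kernel $\mathcal{K}$ satisfies: for $\lambda,\mu\in\mathbb{D}_+$: $\mathcal{K}(\lambda,\mu)=\dfrac{I-B(\lambda)B(\mu)^*}{1-\lambda\bar\mu}$; for $\lambda,\mu\in\mathbb{D}_-$: $\mathcal{K}(\lambda,\mu)=\dfrac{I-B(\bar\lambda)^*B(\bar\mu)}{1-\lambda\bar\mu}$; for $\lambda\in\mathbb{D}_+$, $\mu\in\mathbb{D}_-$: $\mathcal{K}(\lambda,\mu)=\dfrac{B(\lambda)-B(\bar\mu)}{\lambda-\bar\mu}$; for $\lambda\in\mathbb{D}_-$, $\mu\in\mathbb{D}_+$: $\mathcal{K}(\lambda,\mu)=\dfrac{B(\bar\lambda)^*-B(\mu)^*}{\lambda-\bar\mu}$; where in the last two cases, when $\lambda=\bar\mu$, the right-hand side is understood as its limit.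
   Context: $H$ is an infinite-dimensional separable complex Hilbert space with inner product $(\cdot,\cdot)_H$; $T\in\mathbb{B}(H)$, $\|T\|\le1$, is completely non-unitary. $\mathbb{K}=\ker(I-T^*T)$. $\mathbb{H}=H\oplus_\perp H$ with $[(x_1,x_2),(y_1,y_2)]=i(x_1,y_1)_H-i(x_2,y_2)_H$; $S^{\perp_s}=\{a:[a,b]=0\ \forall b\in S\}$; $A_T=\{(x,Tx):x\in\mathbb{K}\}$. $\mathbb{D}_\pm$ are two copies of the open unit disc; for $\lambda\in\mathbb{D}_\pm$, $\bar\lambda$ (conjugate coordinate) is regarded as a point of $\mathbb{D}_\mp$. $N_\lambda=\{(x,\lambda x)\}\cap A_T^{\perp_s}$ ($\lambda\in\mathbb{D}_+$), $N_\lambda=\{(\lambda x,x)\}\cap A_T^{\perp_s}$ ($\lambda\in\mathbb{D}_-$), $x$ ranging over $H$. A boundary quadruple: Hilbert spaces $H_\pm$ and linear $\Gamma_\pm:A_T^{\perp_s}\to H_\pm$ with $(\Gamma_+,\Gamma_-)$ bounded, onto $H_+\oplus_\perp H_-$, kernel $A_T$, and $[a,b]=i(\Gamma_+a,\Gamma_+b)-i(\Gamma_-a,\Gamma_-b)$. Then for $\lambda\in\mathbb{D}_+$, $\Gamma_+|_{N_\lambda}$ is a bijection onto $H_+$ and $\Gamma_-a=B(\lambda)\Gamma_+a$ ($a\in N_\lambda$) for a unique $B(\lambda)\in\mathbb{B}(H_+,H_-)$, $\|B(\lambda)\|<1$, holomorphic in $\lambda$; for $\lambda\in\mathbb{D}_-$,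 $\Gamma_-|_{N_\lambda}$ is a bijection onto $H_-$ and $\Gamma_+a=B(\bar\lambda)^*\Gamma_-a$. $\gamma_+(\lambda)x\in N_\lambda$ with $\Gamma_+\gamma_+(\lambda)x=x$ ($\lambda\in\mathbb{D}_+,x\in H_+$); $\gamma_-(\lambda)x\in N_\lambda$ with $\Gamma_-\gamma_-(\lambda)x=x$ ($\lambda\in\mathbb{D}_-,x\in H_-$). $\varphi_+=pr_1\circ\gamma_+$, $\varphi_-=pr_2\circ\gamma_-$ ($pr_i$: projection of $\mathbb{H}$ onto the $i$-th copy of $H$). Bundles: $E_\lambda=pr_1(N_\lambda)$ ($\lambda\in\mathbb{D}_+$), $E_\lambda=pr_2(N_\lambda)$ ($\lambda\in\mathbb{D}_-$); $F^\dagger_\lambda=E_{\bar\lambda}$; $F_\lambda$ = continuous conjugate-linear functionals on $F^\dagger_\lambda$, pairing $((\cdot,\cdot))$. For $x\in H$, $\hat x(\lambda)\in F_\lambda$ is $\omega\mapsto(x,\omega)_H$. Trivialization: for $\lambda\in\mathbb{D}_+$ define $\varphi_-^\dagger(\lambda):F_\lambda\to H_-$ by $(\varphi_-^\dagger(\lambda)\omega,y)_{H_-}=((\omega,\varphi_-(\bar\lambda)y))$ for all $y\in H_-$; for $\lambda\in\mathbb{D}_-$ define $\varphi_+^\dagger(\lambda):F_\lambda\to H_+$ by $(\varphi_+^\dagger(\lambda)\omega,y)_{H_+}=((\omega,\varphi_+(\bar\lambda)y))$. For a section $s$ of $F$, $f_s(\lambda)=\varphi_-^\dagger(\lambda)s(\lambda)\in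 H_-$ for $\lambda\in\mathbb{D}_+$ and $f_s(\lambda)=\varphi_+^\dagger(\lambda)s(\lambda)\in H_+$ for $\lambda\in\mathbb{D}_-$. The localized kernel: for $\mu\in\mathbb{D}_+$, $\mathcal{K}(\lambda,\mu)y:=f_{\hat z}(\lambda)$ with $z=\varphi_-(\bar\mu)y$, $y\in H_-$; for $\mu\in\mathbb{D}_-$, $\mathcal{K}(\lambda,\mu)y:=f_{\hat z}(\lambda)$ with $z=\varphi_+(\bar\mu)y$, $y\in H_+$. (This is the kernel $K(\lambda,\mu)=\iota_\lambda^\dagger\iota_\mu$ of the model space written in these trivializations.) *)

theory Defs
  imports "HOL-Analysis.Analysis"
begin

text \<open>The separable infinite-dimensional complex Hilbert space H is modelled concretely
  as l2(N, C) (all such spaces are unitarily equivalent).  The auxiliary Hilbert spaces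
  H+ and H- of a boundary quadruple are modelled as closed subspaces of l2 (every
  separable Hilbert space embeds isometrically as such, and H+, H- are separable
  being continuous linear images of a subspace of H x H).\<close>

type_synonym vec = "nat \<Rightarrow> complex"

definition l2 :: "vec set" where
  "l2 = {x. summable (\<lambda>n. (cmod (x n))^2)}"

definition ip :: "vec \<Rightarrow> vec \<Rightarrow> complex" where
  "ip x y = (\<Sum>n. x n * cnj (y n))"

definition l2norm :: "vec \<Rightarrow> real" where
  "l2norm x = sqrt (\<Sum>n. (cmod (x n))^2)"

definition vzero :: vec where "vzero = (\<lambda>n. 0)"
definition vadd :: "vec \<Rightarrow> vec \<Rightarrow> vec" where "vadd x y = (\<lambda>n. x n + y n)"
definition vsub :: "vec \<Rightarrow> vec \<Rightarrow> vec" where "vsub x y = (\<lambda>n. x n - y n)"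
definition vsc :: "complex \<Rightarrow> vec \<Rightarrow> vec" where "vsc c x = (\<lambda>n. c * x n)"

definition closed_subspace :: "vec set \<Rightarrow> bool" where
  "closed_subspace S \<longleftrightarrow> S \<subseteq> l2 \<and> vzero \<in> S \<and>
     (\<forall>x\<in>S. \<forall>y\<in>S. vadd x y \<in> S) \<and> (\<forall>c. \<forall>x\<in>S. vsc c x \<in> S) \<and>
     (\<forall>X x. (\<forall>k. X k \<in> S) \<and> x \<in> l2 \<and> (\<lambda>k. l2norm (vsub (X k) x)) \<longlonglongrightarrow> 0 \<longrightarrow> x \<in> S)"

definition linear_on :: "vec set \<Rightarrow> (vec \<Rightarrow> vec) \<Rightarrow> bool" where
  "linear_on S f \<longleftrightarrow> (\<forall>x\<in>S. \<forall>y\<in>S. f (vadd x y) = vadd (f x) (f y)) \<and>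
                     (\<forall>c. \<forall>x\<in>S. f (vsc c x) = vsc c (f x))"

definition bounded_op :: "vec set \<Rightarrow> vec set \<Rightarrow> (vec \<Rightarrow> vec) \<Rightarrow> bool" where
  "bounded_op S1 S2 f \<longleftrightarrow> (\<forall>x\<in>S1. f x \<in> S2) \<and> linear_on S1 f \<and>
                          (\<exists>C. \<forall>x\<in>S1. l2norm (f x) \<le> C * l2norm x)"

definition opadj :: "vec set \<Rightarrow> (vec \<Rightarrow> vec) \<Rightarrow> vec \<Rightarrow> vec" where
  "opadj S1 f y = (THE x. x \<in> S1 \<and> (\<forall>x'\<in>S1. ip (f x') y = ip x' x))"

definition contraction :: "(vec \<Rightarrow> vec) \<Rightarrow> bool" where
  "contraction T \<longleftrightarrow> bounded_op l2 l2 T \<and> (\<forall>x\<in>l2. l2norm (T x) \<le> l2norm x)"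

definition cnu :: "(vec \<Rightarrow> vec) \<Rightarrow> bool" where
  "cnu T \<longleftrightarrow> \<not> (\<exists>M. closed_subspace M \<and> M \<noteq> {vzero} \<and> T ` M \<subseteq> M \<and> opadj l2 T ` M \<subseteq> M \<and>
       (\<forall>x\<in>M. opadj l2 T (T x) = x \<and> T (opadj l2 T x) = x))"

definition defect_ker :: "(vec \<Rightarrow> vec) \<Rightarrow> vec set" where
  "defect_ker T = {x \<in> l2. opadj l2 T (T x) = x}"

definition sform :: "vec \<times> vec \<Rightarrow> vec \<times> vec \<Rightarrow> complex" where
  "sform a b = \<i> * ip (fst a) (fst b) - \<i> * ip (snd a) (snd b)"

definition sperp :: "(vec \<times> vec) set \<Rightarrow> (vec \<times> vec) set" where
  "sperp S = {a. fst a \<in> l2 \<and> snd a \<in> l2 \<and> (\<forall>b\<in>S. sform a b = 0)}"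

definition A_T :: "(vec \<Rightarrow> vec) \<Rightarrow> (vec \<times> vec) set" where
  "A_T T = {(x, T x) | x. x \<in> defect_ker T}"

definition padd :: "vec \<times> vec \<Rightarrow> vec \<times> vec \<Rightarrow> vec \<times> vec" where
  "padd a b = (vadd (fst a) (fst b), vadd (snd a) (snd b))"
definition psc :: "complex \<Rightarrow> vec \<times> vec \<Rightarrow> vec \<times> vec" where
  "psc c a = (vsc c (fst a), vsc c (snd a))"

definition boundary_quadruple ::
  "(vec \<Rightarrow> vec) \<Rightarrow> vec set \<Rightarrow> vec set \<Rightarrow> (vec \<times> vec \<Rightarrow> vec) \<Rightarrow> (vec \<times> vec \<Rightarrow> vec) \<Rightarrow> bool" where
  "boundary_quadruple T Hp Hm Gp Gm \<longleftrightarrow>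
     closed_subspace Hp \<and> closed_subspace Hm \<and>
     (\<forall>a\<in>sperp (A_T T). Gp a \<in> Hp \<and> Gm a \<in> Hm) \<and>
     (\<forall>a\<in>sperp (A_T T). \<forall>b\<in>sperp (A_T T).
        Gp (padd a b) = vadd (Gp a) (Gp b) \<and> Gm (padd a b) = vadd (Gm a) (Gm b)) \<and>
     (\<forall>c. \<forall>a\<in>sperp (A_T T). Gp (psc c a) = vsc c (Gp a) \<and> Gm (psc c a) = vsc c (Gm a)) \<and>
     (\<exists>C. \<forall>a\<in>sperp (A_T T).
        (l2norm (Gp a))^2 + (l2norm (Gm a))^2 \<le> C * ((l2norm (fst a))^2 + (l2norm (snd a))^2)) \<and>
     (\<forall>x\<in>Hp. \<forall>y\<in>Hm. \<exists>a\<in>sperp (A_T T). Gp a = x \<and> Gm a = y) \<and>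
     {a \<in> sperp (A_T T). Gp a = vzero \<and> Gm a = vzero} = A_T T \<and>
     (\<forall>a\<in>sperp (A_T T). \<forall>b\<in>sperp (A_T T).
        sform a b = \<i> * ip (Gp a) (Gp b) - \<i> * ip (Gm a) (Gm b))"

text \<open>Points of the two discs \<open>\<bbbD>\<^sub>+\<close> (sheet Pl) and \<open>\<bbbD>\<^sub>-\<close> (sheet Mi), given by a
  sheet and the coordinate.\<close>
datatype sheet = Pl | Mi

type_synonym pt = "sheet \<times> complex"

fun flip :: "sheet \<Rightarrow> sheet" where "flip Pl = Mi" | "flip Mi = Pl"

definition ptbar :: "pt \<Rightarrow> pt" where "ptbar p = (flip (fst p), cnj (snd p))"

definition Nsp :: "(vec \<Rightarrow> vec) \<Rightarrow> pt \<Rightarrow> (vec \<times> vec) set" where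
  "Nsp T p = (case fst p of
       Pl \<Rightarrow> {(x, vsc (snd p) x) | x. x \<in> l2}
     | Mi \<Rightarrow> {(vsc (snd p) x, x) | x. x \<in> l2}) \<inter> sperp (A_T T)"

definition weyl_function ::
  "(vec \<Rightarrow> vec) \<Rightarrow> vec set \<Rightarrow> vec set \<Rightarrow> (vec \<times> vec \<Rightarrow> vec) \<Rightarrow> (vec \<times> vec \<Rightarrow> vec)
   \<Rightarrow> (complex \<Rightarrow> vec \<Rightarrow> vec) \<Rightarrow> bool" where
  "weyl_function T Hp Hm Gp Gm B \<longleftrightarrow>
     (\<forall>c. cmod c < 1 \<longrightarrow> bounded_op Hp Hm (B c) \<and> (\<forall>a\<in>Nsp T (Pl, c). Gm a = B c (Gp a)))"

definition gam ::
  "(vec \<Rightarrow> vec) \<Rightarrow> (vec \<times> vec \<Rightarrow> vec) \<Rightarrow> (vec \<times> vec \<Rightarrow> vec) \<Rightarrow> pt \<Rightarrow> vec \<Rightarrow> vec \<times> vec" where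
  "gam T Gp Gm p x = (THE a. a \<in> Nsp T p \<and> (case fst p of Pl \<Rightarrow> Gp a | Mi \<Rightarrow> Gm a) = x)"

definition phi ::
  "(vec \<Rightarrow> vec) \<Rightarrow> (vec \<times> vec \<Rightarrow> vec) \<Rightarrow> (vec \<times> vec \<Rightarrow> vec) \<Rightarrow> pt \<Rightarrow> vec \<Rightarrow> vec" where
  "phi T Gp Gm p x = (case fst p of Pl \<Rightarrow> fst (gam T Gp Gm p x) | Mi \<Rightarrow> snd (gam T Gp Gm p x))"

text \<open>Bundles \<open>E\<close>, \<open>F\<^sup>\<dagger>\<close> and the fibres \<open>F\<^sub>\<lambda>\<close> (continuous conjugate-linear functionals on
  \<open>F\<^sup>\<dagger>\<^sub>\<lambda>\<close>, pairing = evaluation).\<close>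
definition Ebun :: "(vec \<Rightarrow> vec) \<Rightarrow> pt \<Rightarrow> vec set" where
  "Ebun T p = (case fst p of Pl \<Rightarrow> fst ` Nsp T p | Mi \<Rightarrow> snd ` Nsp T p)"

definition Fdag :: "(vec \<Rightarrow> vec) \<Rightarrow> pt \<Rightarrow> vec set" where
  "Fdag T p = Ebun T (ptbar p)"

definition Ffib :: "(vec \<Rightarrow> vec) \<Rightarrow> pt \<Rightarrow> (vec \<Rightarrow> complex) set" where
  "Ffib T p = {\<omega>. (\<forall>x\<in>Fdag T p. \<forall>y\<in>Fdag T p. \<omega> (vadd x y) = \<omega> x + \<omega> y) \<and>
                  (\<forall>c. \<forall>x\<in>Fdag T p. \<omega> (vsc c x) = cnj c * \<omega> x) \<and>
                  (\<exists>C. \<forall>x\<in>Fdag T p. cmod (\<omega> x) \<le> C * l2norm x)}"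

definition hat :: "vec \<Rightarrow> pt \<Rightarrow> (vec \<Rightarrow> complex)" where
  "hat x p = (\<lambda>\<omega>. ip x \<omega>)"

text \<open>Trivialization: for \<open>\<lambda> \<in> \<bbbD>\<^sub>+\<close> the map \<open>\<phi>\<^sub>-\<^sup>\<dagger>(\<lambda>) : F\<^sub>\<lambda> \<rightarrow> H\<^sub>-\<close>, for \<open>\<lambda> \<in> \<bbbD>\<^sub>-\<close> the map
  \<open>\<phi>\<^sub>+\<^sup>\<dagger>(\<lambda>) : F\<^sub>\<lambda> \<rightarrow> H\<^sub>+\<close>.\<close>
definition tgt :: "vec set \<Rightarrow> vec set \<Rightarrow> pt \<Rightarrow> vec set" where
  "tgt Hp Hm p = (case fst p of Pl \<Rightarrow> Hm | Mi \<Rightarrow> Hp)"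

definition phidag ::
  "(vec \<Rightarrow> vec) \<Rightarrow> vec set \<Rightarrow> vec set \<Rightarrow> (vec \<times> vec \<Rightarrow> vec) \<Rightarrow> (vec \<times> vec \<Rightarrow> vec)
   \<Rightarrow> pt \<Rightarrow> (vec \<Rightarrow> complex) \<Rightarrow> vec" where
  "phidag T Hp Hm Gp Gm p \<omega> =
     (THE w. w \<in> tgt Hp Hm p \<and> (\<forall>y\<in>tgt Hp Hm p. ip w y = \<omega> (phi T Gp Gm (ptbar p) y)))"

definition fsec ::
  "(vec \<Rightarrow> vec) \<Rightarrow> vec set \<Rightarrow> vec set \<Rightarrow> (vec \<times> vec \<Rightarrow> vec) \<Rightarrow> (vec \<times> vec \<Rightarrow> vec)
   \<Rightarrow> (pt \<Rightarrow> vec \<Rightarrow> complex) \<Rightarrow> pt \<Rightarrow> vec" where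
  "fsec T Hp Hm Gp Gm s p = phidag T Hp Hm Gp Gm p (s p)"

definition Kloc ::
  "(vec \<Rightarrow> vec) \<Rightarrow> vec set \<Rightarrow> vec set \<Rightarrow> (vec \<times> vec \<Rightarrow> vec) \<Rightarrow> (vec \<times> vec \<Rightarrow> vec)
   \<Rightarrow> pt \<Rightarrow> pt \<Rightarrow> vec \<Rightarrow> vec" where
  "Kloc T Hp Hm Gp Gm p q y = fsec T Hp Hm Gp Gm (hat (phi T Gp Gm (ptbar q) y)) p"

end

theory Submission
  imports Defs
begin

text \<open>
  For a point of either disc, \<open>\<gamma>\<close> lifts a boundary value to the defect space \<open>N\<close>, which
  is the graph of multiplication by the coordinate. Green's identity, applied to two such lifts
  \<open>a\<close> and \<open>b\<close>, reads \<open>\<kappa> ((\<phi> y, \<phi> v)) = (\<Gamma>\<^sub>+ a, \<Gamma>\<^sub>+ b) - (\<Gamma>\<^sub>- a, \<Gamma>\<^sub>- b)\<close>, where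
  \<open>\<kappa>\<close> is \<open>1 - \<lambda>\<mu>\<^sup>*\<close> or \<open>\<lambda> - \<mu>\<^sup>*\<close> up to sign and the boundary values are \<open>y\<close>, \<open>v\<close>,
  \<open>B y\<close> or \<open>B\<^sup>* y\<close>. As \<open>\<K>(\<lambda>,\<mu>) y\<close> is the Riesz representer of \<open>v \<mapsto> ((\<phi> y, \<phi> v))\<close>,
  dividing by \<open>\<kappa>\<close> gives the four formulas. Where \<open>\<kappa>\<close> vanishes (\<open>\<lambda> = \<mu>\<^sup>*\<close>) the
  formula is recovered as a limit, from the joint continuity of \<open>\<K>\<close> that Lipschitz bounds
  on \<open>\<phi>\<close> provide.

  That \<open>\<Gamma>\<^sub>+\<close> maps \<open>N\<^sub>\<lambda>\<close> bijectively onto \<open>H\<^sub>+\<close> is derived from the axioms: Green's identity on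
  \<open>N\<^sub>\<lambda>\<close> gives \<open>(1 - |\<lambda>|\<^sup>2) \<parallel>pr\<^sub>1 a\<parallel>\<^sup>2 \<le> \<parallel>\<Gamma>\<^sub>+ a\<parallel>\<^sup>2\<close>, hence injectivity and closed range,
  and an orthogonality argument gives density. The sheet \<open>\<bbbD>\<^sub>-\<close> reduces to \<open>\<bbbD>\<^sub>+\<close> by
  swapping the two components.
\<close>

section \<open>The Hilbert space l2\<close>

lemma vadd_apply [simp]: "vadd x y n = x n + y n"
  and vsub_apply [simp]: "vsub x y n = x n - y n"
  and vsc_apply [simp]: "vsc c x n = c * x n"
  and vzero_apply [simp]: "vzero n = 0"
  by (simp_all add: vadd_def vsub_def vsc_def vzero_def)

lemma vsub_eq_vzero_iff [simp]: "vsub x y = vzero \<longleftrightarrow> x = y"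
  by (auto simp: fun_eq_iff)

lemma vsub_self [simp]: "vsub x x = vzero"
  by (simp add: fun_eq_iff)

lemma vsub_as_vadd: "vsub x y = vadd x (vsc (-1) y)"
  by (simp add: fun_eq_iff)

lemma vsub_vsub_cancel: "vsub x z = vadd (vsub x y) (vsub y z)"
  by (simp add: fun_eq_iff)

lemma l2_vzero [simp]: "vzero \<in> l2"
  by (simp add: l2_def)

lemma l2_vsc [simp]: "x \<in> l2 \<Longrightarrow> vsc c x \<in> l2"
  by (simp add: l2_def norm_mult power_mult_distrib summable_mult)

lemma l2_vadd [simp]:
  assumes "x \<in> l2" "y \<in> l2"
  shows "vadd x y \<in> l2"
  unfolding l2_def mem_Collect_eq
proof (rule summable_comparison_test)
  have "(cmod (a + b))^2 \<le> 2 * (cmod a)^2 + 2 * (cmod b)^2" for a b :: complex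
  proof -
    have "(cmod (a + b))^2 \<le> (cmod a + cmod b)^2"
      by (simp add: norm_triangle_ineq power_mono)
    also have "\<dots> \<le> 2 * (cmod a)^2 + 2 * (cmod b)^2"
      using sum_squares_bound[of "cmod a" "cmod b"] by (simp add: power2_sum)
    finally show ?thesis .
  qed
  then show "\<exists>N. \<forall>n\<ge>N. norm ((cmod (vadd x y n))^2) \<le> 2 * (cmod (x n))^2 + 2 * (cmod (y n))^2"
    by simp
  show "summable (\<lambda>n. 2 * (cmod (x n))^2 + 2 * (cmod (y n))^2)"
    using assms by (auto intro!: summable_add summable_mult simp: l2_def)
qed

lemma l2_vsub [simp]: "x \<in> l2 \<Longrightarrow> y \<in> l2 \<Longrightarrow> vsub x y \<in> l2"
  by (simp add: vsub_as_vadd)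

lemma summable_ip:
  assumes "x \<in> l2" "y \<in> l2"
  shows "summable (\<lambda>n. x n * cnj (y n))"
proof (rule summable_norm_cancel, rule summable_comparison_test)
  have "cmod a * cmod b \<le> (cmod a)^2 + (cmod b)^2" for a b :: complex
    using sum_squares_bound[of "cmod a" "cmod b"] mult_nonneg_nonneg[OF norm_ge_zero norm_ge_zero, of a b]
    by linarith
  then show "\<exists>N. \<forall>n\<ge>N. norm (norm (x n * cnj (y n))) \<le> (cmod (x n))^2 + (cmod (y n))^2"
    by (simp add: norm_mult)
  show "summable (\<lambda>n. (cmod (x n))^2 + (cmod (y n))^2)"
    using assms by (auto intro!: summable_add simp: l2_def)
qed

lemma ip_vadd_left: "x \<in> l2 \<Longrightarrow> y \<in> l2 \<Longrightarrow> z \<in> l2 \<Longrightarrow> ip (vadd x y) z = ip x z + ip y z"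
  unfolding ip_def by (simp add: distrib_right suminf_add summable_ip)

lemma ip_vsc_left: "x \<in> l2 \<Longrightarrow> z \<in> l2 \<Longrightarrow> ip (vsc c x) z = c * ip x z"
  unfolding ip_def by (simp add: mult.assoc suminf_mult summable_ip)

lemma ip_conj_swap:
  assumes "x \<in> l2" "y \<in> l2"
  shows "ip y x = cnj (ip x y)"
proof -
  have "(\<lambda>n. cnj (x n * cnj (y n))) sums cnj (ip x y)"
    unfolding ip_def sums_cnj using summable_ip[OF assms] by (rule summable_sums)
  then show ?thesis
    unfolding ip_def by (simp add: mult.commute sums_iff)
qed

lemma ip_vadd_right: "x \<in> l2 \<Longrightarrow> y \<in> l2 \<Longrightarrow> z \<in> l2 \<Longrightarrow> ip z (vadd x y) = ip z x + ip z y"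
  by (metis ip_conj_swap ip_vadd_left complex_cnj_add l2_vadd)

lemma ip_vsc_right: "x \<in> l2 \<Longrightarrow> z \<in> l2 \<Longrightarrow> ip z (vsc c x) = cnj c * ip z x"
  by (metis ip_conj_swap ip_vsc_left complex_cnj_mult l2_vsc)

lemma ip_vsub_left: "x \<in> l2 \<Longrightarrow> y \<in> l2 \<Longrightarrow> z \<in> l2 \<Longrightarrow> ip (vsub x y) z = ip x z - ip y z"
  by (simp add: vsub_as_vadd ip_vadd_left ip_vsc_left)

lemma ip_vsub_right: "x \<in> l2 \<Longrightarrow> y \<in> l2 \<Longrightarrow> z \<in> l2 \<Longrightarrow> ip z (vsub x y) = ip z x - ip z y"
  by (simp add: vsub_as_vadd ip_vadd_right ip_vsc_right)

lemma ip_vzero_left [simp]: "ip vzero z = 0"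
  and ip_vzero_right [simp]: "ip z vzero = 0"
  by (simp_all add: ip_def)

lemmas ip_linear = ip_vadd_left ip_vadd_right ip_vsc_left ip_vsc_right ip_vsub_left ip_vsub_right

lemma l2norm_nonneg [simp]: "x \<in> l2 \<Longrightarrow> 0 \<le> l2norm x"
  by (simp add: l2norm_def l2_def suminf_nonneg)

lemma l2norm_vzero [simp]: "l2norm vzero = 0"
  by (simp add: l2norm_def)

lemma l2norm_square: "x \<in> l2 \<Longrightarrow> (l2norm x)^2 = (\<Sum>n. (cmod (x n))^2)"
  by (simp add: l2norm_def l2_def suminf_nonneg)

lemma ip_self:
  assumes "x \<in> l2"
  shows "ip x x = complex_of_real ((l2norm x)^2)"
proof -
  have "ip x x = (\<Sum>n. complex_of_real ((cmod (x n))^2))"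
    unfolding ip_def by (simp only: complex_norm_square)
  also have "\<dots> = complex_of_real ((l2norm x)^2)"
    using assms by (simp add: l2_def suminf_of_real l2norm_square)
  finally show ?thesis .
qed

lemma l2norm_square_ip: "x \<in> l2 \<Longrightarrow> (l2norm x)^2 = Re (ip x x)"
  by (simp add: ip_self)

lemma l2norm_eq_zero_iff:
  assumes "x \<in> l2"
  shows "l2norm x = 0 \<longleftrightarrow> x = vzero"
proof
  assume "l2norm x = 0"
  then have "(\<Sum>n. (cmod (x n))^2) = 0"
    using l2norm_square[OF assms] by simp
  then have "\<forall>n. (cmod (x n))^2 = 0"
    using assms by (subst (asm) suminf_eq_zero_iff) (auto simp: l2_def)
  then show "x = vzero"
    by (simp add: fun_eq_iff)
qed simp

lemma ip_self_eq_zero_iff: "x \<in> l2 \<Longrightarrow> ip x x = 0 \<longleftrightarrow> x = vzero"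
  by (simp add: ip_self l2norm_eq_zero_iff)

lemma component_le_l2norm:
  assumes "x \<in> l2"
  shows "cmod (x j) \<le> l2norm x"
proof -
  have "(cmod (x j))^2 \<le> (\<Sum>n. (cmod (x n))^2)"
    using assms sum_le_suminf[of "\<lambda>n. (cmod (x n))^2" "{j}"] by (auto simp: l2_def)
  then show ?thesis
    by (simp add: l2norm_def real_le_rsqrt)
qed

lemma l2norm_square_vadd: "x \<in> l2 \<Longrightarrow> y \<in> l2 \<Longrightarrow>
    (l2norm (vadd x y))^2 = (l2norm x)^2 + 2 * Re (ip x y) + (l2norm y)^2"
  by (simp add: l2norm_square_ip ip_linear ip_conj_swap[of x y])

lemma l2norm_square_vsub: "x \<in> l2 \<Longrightarrow> y \<in> l2 \<Longrightarrow>
    (l2norm (vsub x y))^2 = (l2norm x)^2 - 2 * Re (ip x y) + (l2norm y)^2"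
  by (simp add: l2norm_square_ip ip_linear ip_conj_swap[of x y])

lemma l2norm_vsc:
  assumes "x \<in> l2"
  shows "l2norm (vsc c x) = cmod c * l2norm x"
proof -
  have "ip (vsc c x) (vsc c x) = (c * cnj c) * ip x x"
    using assms by (simp add: ip_linear)
  also have "\<dots> = complex_of_real ((cmod c * l2norm x)^2)"
    using assms by (simp add: ip_self complex_norm_square[symmetric] power_mult_distrib)
  finally have "(l2norm (vsc c x))^2 = (cmod c * l2norm x)^2"
    using assms by (simp add: l2norm_square_ip)
  then show ?thesis
    using assms by (simp add: power2_eq_iff_nonneg)
qed

lemma l2norm_vsub_commute:
  assumes "x \<in> l2" "y \<in> l2"
  shows "l2norm (vsub x y) = l2norm (vsub y x)"
proof -
  have "vsub x y = vsc (-1) (vsub y x)"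
    by (simp add: fun_eq_iff)
  then show ?thesis
    using assms by (simp add: l2norm_vsc)
qed

lemma ip_cauchy_schwarz:
  assumes x: "x \<in> l2" and y: "y \<in> l2"
  shows "cmod (ip x y) \<le> l2norm x * l2norm y"
proof (cases "y = vzero")
  case False
  define n where "n = (l2norm y)^2"
  have n: "n > 0"
    using False y by (simp add: n_def l2norm_eq_zero_iff)
  define p where "p = ip x y"
  define t where "t = p / complex_of_real n"
  have "cnj p * p = complex_of_real ((cmod p)^2)"
    by (metis complex_norm_square mult.commute)
  then have "Re (ip x (vsc t y)) = (cmod p)^2 / n"
    using x y by (simp add: ip_vsc_right t_def p_def)
  moreover have "(cmod t)^2 * n = (cmod p)^2 / n"
    using n by (simp add: t_def norm_divide power_divide power2_eq_square)
  moreover have "0 \<le> (l2norm (vsub x (vsc t y)))^2"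
    by simp
  ultimately have "(cmod p)^2 / n \<le> (l2norm x)^2"
    using x y by (simp add: l2norm_square_vsub l2norm_vsc power_mult_distrib n_def)
  then have "(cmod p)^2 \<le> (l2norm x * l2norm y)^2"
    using n by (simp add: divide_le_eq n_def power_mult_distrib)
  then show ?thesis
    unfolding p_def using x y by (simp add: power2_le_iff_abs_le)
qed simp

lemma l2norm_triangle:
  assumes "x \<in> l2" "y \<in> l2"
  shows "l2norm (vadd x y) \<le> l2norm x + l2norm y"
proof -
  have "Re (ip x y) \<le> l2norm x * l2norm y"
    using ip_cauchy_schwarz[OF assms] complex_Re_le_cmod order_trans by blast
  then have "(l2norm (vadd x y))^2 \<le> (l2norm x + l2norm y)^2"
    using assms by (simp add: l2norm_square_vadd power2_sum)
  then show ?thesis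
    using assms by (simp add: power2_le_iff_abs_le)
qed

lemma l2norm_triangle_vsub:
  "x \<in> l2 \<Longrightarrow> y \<in> l2 \<Longrightarrow> z \<in> l2 \<Longrightarrow> l2norm (vsub x z) \<le> l2norm (vsub x y) + l2norm (vsub y z)"
  by (metis l2norm_triangle l2_vsub vsub_vsub_cancel)

definition l2_tendsto :: "(nat \<Rightarrow> vec) \<Rightarrow> vec \<Rightarrow> bool" where
  "l2_tendsto X x \<longleftrightarrow> (\<lambda>k. l2norm (vsub (X k) x)) \<longlonglongrightarrow> 0"

lemma l2_tendsto_const: "l2_tendsto (\<lambda>k. x) x"
  by (simp add: l2_tendsto_def)

lemma l2_tendsto_if_dominated:
  assumes "l2_tendsto X x" and "\<And>k. l2norm (vsub (Y k) y) \<le> C * l2norm (vsub (X k) x)"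
    and "\<And>k. Y k \<in> l2" "y \<in> l2"
  shows "l2_tendsto Y y"
proof -
  have "(\<lambda>k. C * l2norm (vsub (X k) x)) \<longlonglongrightarrow> 0"
    using assms(1) tendsto_mult_right_zero unfolding l2_tendsto_def by blast
  then show ?thesis
    unfolding l2_tendsto_def
    by (rule Lim_null_comparison[rotated]) (use assms in \<open>auto intro!: always_eventually\<close>)
qed

lemma l2_tendsto_unique:
  assumes "\<And>k. X k \<in> l2" "x \<in> l2" "y \<in> l2" "l2_tendsto X x" "l2_tendsto X y"
  shows "x = y"
proof -
  have lim: "(\<lambda>k. l2norm (vsub x (X k)) + l2norm (vsub (X k) y)) \<longlonglongrightarrow> 0 + 0"
    using assms by (intro tendsto_add) (simp_all add: l2_tendsto_def l2norm_vsub_commute)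
  have "l2norm (vsub x y) \<le> l2norm (vsub x (X k)) + l2norm (vsub (X k) y)" for k
    using assms by (intro l2norm_triangle_vsub) auto
  then have "l2norm (vsub x y) \<le> 0"
    using LIMSEQ_le_const[OF lim] by simp
  then have "l2norm (vsub x y) = 0"
    using assms by (simp add: order_antisym)
  then show ?thesis
    using assms by (simp add: l2norm_eq_zero_iff)
qed

lemma l2_tendsto_vsub:
  assumes "\<And>k. X k \<in> l2" "\<And>k. Y k \<in> l2" "x \<in> l2" "y \<in> l2" "l2_tendsto X x" "l2_tendsto Y y"
  shows "l2_tendsto (\<lambda>k. vsub (X k) (Y k)) (vsub x y)"
proof -
  have lim: "(\<lambda>k. l2norm (vsub (X k) x) + l2norm (vsub (Y k) y)) \<longlonglongrightarrow> 0"
    using tendsto_add[OF assms(5,6)[unfolded l2_tendsto_def]] by simp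
  have "vsub (vsub (X k) (Y k)) (vsub x y) = vadd (vsub (X k) x) (vsc (-1) (vsub (Y k) y))" for k
    by (simp add: fun_eq_iff)
  then have "l2norm (vsub (vsub (X k) (Y k)) (vsub x y)) \<le> l2norm (vsub (X k) x) + l2norm (vsub (Y k) y)"
    for k using assms l2norm_triangle[of "vsub (X k) x" "vsc (-1) (vsub (Y k) y)"]
    by (simp add: l2norm_vsc)
  then show ?thesis
    unfolding l2_tendsto_def
    by (intro Lim_null_comparison[OF _ lim]) (use assms in \<open>auto intro!: always_eventually\<close>)
qed

lemma l2_tendsto_vsc:
  assumes "\<And>k. X k \<in> l2" "x \<in> l2" "l2_tendsto X x"
  shows "l2_tendsto (\<lambda>k. vsc c (X k)) (vsc c x)"
proof (rule l2_tendsto_if_dominated[OF assms(3)])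
  have "vsub (vsc c (X k)) (vsc c x) = vsc c (vsub (X k) x)" for k
    by (simp add: fun_eq_iff algebra_simps)
  then show "l2norm (vsub (vsc c (X k)) (vsc c x)) \<le> cmod c * l2norm (vsub (X k) x)" for k
    using assms by (simp add: l2norm_vsc)
qed (use assms in auto)

lemma l2_tendsto_Cauchy:
  assumes "\<And>k. X k \<in> l2" "x \<in> l2" "l2_tendsto X x" "e > 0"
  shows "\<exists>N. \<forall>m\<ge>N. \<forall>n\<ge>N. l2norm (vsub (X m) (X n)) < e"
proof -
  have "\<forall>r>0. \<exists>N. \<forall>k\<ge>N. norm (l2norm (vsub (X k) x) - 0) < r"
    using assms(3) unfolding l2_tendsto_def LIMSEQ_iff .
  moreover have "e/2 > 0"
    using assms(4) by simp
  ultimately obtain N where N: "\<And>k. k \<ge> N \<Longrightarrow> l2norm (vsub (X k) x) < e/2"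
    using assms(1,2) by fastforce
  have "l2norm (vsub (X m) (X n)) < e" if "N \<le> m" "N \<le> n" for m n
  proof -
    have "l2norm (vsub (X m) (X n)) \<le> l2norm (vsub (X m) x) + l2norm (vsub (X n) x)"
      using assms l2norm_triangle_vsub[of "X m" x "X n"] l2norm_vsub_commute[of x "X n"] by simp
    then show ?thesis
      using N[OF that(1)] N[OF that(2)] by linarith
  qed
  then show ?thesis
    by blast
qed

lemma ip_tendsto_left:
  assumes "\<And>k. X k \<in> l2" "x \<in> l2" "y \<in> l2" "l2_tendsto X x"
  shows "(\<lambda>k. ip (X k) y) \<longlonglongrightarrow> ip x y"
proof -
  have lim: "(\<lambda>k. l2norm (vsub (X k) x) * l2norm y) \<longlonglongrightarrow> 0"
    using assms(4) tendsto_mult_left_zero unfolding l2_tendsto_def by blast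
  have "norm (ip (X k) y - ip x y) \<le> l2norm (vsub (X k) x) * l2norm y" for k
    using assms ip_cauchy_schwarz[of "vsub (X k) x" y] by (simp add: ip_vsub_left)
  then have "(\<lambda>k. ip (X k) y - ip x y) \<longlonglongrightarrow> 0"
    by (intro Lim_null_comparison[OF always_eventually lim]) blast
  then show ?thesis
    by (rule LIM_zero_cancel)
qed

lemma ip_tendsto_right:
  assumes "\<And>k. X k \<in> l2" "x \<in> l2" "y \<in> l2" "l2_tendsto X x"
  shows "(\<lambda>k. ip y (X k)) \<longlonglongrightarrow> ip y x"
proof -
  have "ip y (X k) = cnj (ip (X k) y)" for k
    using assms ip_conj_swap by blast
  moreover have "ip y x = cnj (ip x y)"
    using assms ip_conj_swap by blast
  ultimately show ?thesis
    using tendsto_cnj[OF ip_tendsto_left[OF assms]] by simp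
qed

lemma partial_sum_le_l2norm:
  assumes "z \<in> l2"
  shows "(\<Sum>j<J. (cmod (z j))^2) \<le> (l2norm z)^2"
  using assms sum_le_suminf[of "\<lambda>j. (cmod (z j))^2" "{..<J}"] by (simp add: l2_def l2norm_square)

lemma l2_if_partial_sums_bounded:
  assumes bound: "\<And>J. (\<Sum>j<J. (cmod (z j))^2) \<le> e^2" and e: "0 \<le> e"
  shows "z \<in> l2" and "l2norm z \<le> e"
proof -
  have "summable (\<lambda>j. (cmod (z j))^2)"
    using bound by (intro summableI_nonneg_bounded) auto
  then show z: "z \<in> l2"
    by (simp add: l2_def)
  have "(\<Sum>j. (cmod (z j))^2) \<le> e^2"
    using \<open>summable _\<close> bound by (intro suminf_le_const) auto
  then show "l2norm z \<le> e"
    using e z by (simp add: l2norm_square[symmetric] power2_le_iff_abs_le)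
qed

lemma Cauchy_coordinatewise_limit:
  assumes X: "\<And>k. X k \<in> l2" and coord: "\<And>j. (\<lambda>k. X k j) \<longlonglongrightarrow> x j"
    and N: "\<forall>m\<ge>N. \<forall>n\<ge>N. l2norm (vsub (X m) (X n)) < e" and m: "N \<le> m"
  shows "vsub (X m) x \<in> l2" and "l2norm (vsub (X m) x) \<le> e"
proof -
  have e: "0 \<le> e"
    using N X[of N] l2norm_nonneg[of "vsub (X N) (X N)"] by fastforce
  have "(\<Sum>j<J. (cmod (X m j - x j))^2) \<le> e^2" for J
  proof (rule LIMSEQ_le_const2)
    show "(\<lambda>n. \<Sum>j<J. (cmod (X m j - X n j))^2) \<longlonglongrightarrow> (\<Sum>j<J. (cmod (X m j - x j))^2)"
      by (intro tendsto_intros coord)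
    have "(\<Sum>j<J. (cmod (X m j - X n j))^2) \<le> e^2" if "N \<le> n" for n
    proof -
      have "(l2norm (vsub (X m) (X n)))^2 \<le> e^2"
        using N m that X by (intro power_mono) (auto intro: less_imp_le)
      then show ?thesis
        using partial_sum_le_l2norm[of "vsub (X m) (X n)" J] X by simp
    qed
    then show "\<exists>N. \<forall>n\<ge>N. (\<Sum>j<J. (cmod (X m j - X n j))^2) \<le> e^2"
      by blast
  qed
  then show "vsub (X m) x \<in> l2" and "l2norm (vsub (X m) x) \<le> e"
    using l2_if_partial_sums_bounded[OF _ e, of "vsub (X m) x"] by simp_all
qed

lemma l2_complete:
  assumes X: "\<And>k. X k \<in> l2"
    and Cauchy: "\<And>e. e > 0 \<Longrightarrow> \<exists>N. \<forall>m\<ge>N. \<forall>n\<ge>N. l2norm (vsub (X m) (X n)) < e"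
  shows "\<exists>x\<in>l2. l2_tendsto X x"
proof -
  have "Cauchy (\<lambda>k. X k j)" for j
    unfolding Cauchy_def dist_norm
  proof (intro allI impI)
    fix e :: real
    assume "e > 0"
    then obtain N where N: "\<forall>m\<ge>N. \<forall>n\<ge>N. l2norm (vsub (X m) (X n)) < e"
      using Cauchy by blast
    have "cmod (X m j - X n j) < e" if "N \<le> m" "N \<le> n" for m n
      using component_le_l2norm[of "vsub (X m) (X n)" j] X N that by fastforce
    then show "\<exists>N. \<forall>m\<ge>N. \<forall>n\<ge>N. cmod (X m j - X n j) < e"
      by blast
  qed
  then obtain x where coord: "\<And>j. (\<lambda>k. X k j) \<longlonglongrightarrow> x j"
    unfolding Cauchy_convergent_iff convergent_def by metis
  obtain N where "\<forall>m\<ge>N. \<forall>n\<ge>N. l2norm (vsub (X m) (X n)) < 1"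
    using Cauchy[of 1] by auto
  then have "vsub (X N) x \<in> l2"
    using Cauchy_coordinatewise_limit[OF X coord] by blast
  moreover have "x = vsub (X N) (vsub (X N) x)"
    by (simp add: fun_eq_iff)
  ultimately have "x \<in> l2"
    using X l2_vsub by metis
  moreover have "l2_tendsto X x"
    unfolding l2_tendsto_def LIMSEQ_iff
  proof (intro allI impI)
    fix e :: real
    assume "e > 0"
    then obtain N where "\<forall>m\<ge>N. \<forall>n\<ge>N. l2norm (vsub (X m) (X n)) < e/2"
      using Cauchy[of "e/2"] by auto
    then have "l2norm (vsub (X m) x) \<le> e/2" if "N \<le> m" for m
      using Cauchy_coordinatewise_limit[OF X coord] that by blast
    then have "norm (l2norm (vsub (X k) x) - 0) < e" if "N \<le> k" for k
      using \<open>e > 0\<close> X \<open>x \<in> l2\<close> that by fastforce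
    then show "\<exists>N. \<forall>k\<ge>N. norm (l2norm (vsub (X k) x) - 0) < e"
      by blast
  qed
  ultimately show ?thesis
    by blast
qed

lemma l2_convergent_if_increments_dominated:
  assumes "\<And>k. X k \<in> l2" "x \<in> l2" "l2_tendsto X x" "\<And>k. Y k \<in> l2" "C > 0"
    and "\<And>m n. l2norm (vsub (Y m) (Y n)) \<le> C * l2norm (vsub (X m) (X n))"
  shows "\<exists>y\<in>l2. l2_tendsto Y y"
proof (rule l2_complete)
  fix e :: real
  assume "e > 0"
  then have "e / C > 0"
    using assms(5) by simp
  then obtain N where N: "\<forall>m\<ge>N. \<forall>n\<ge>N. l2norm (vsub (X m) (X n)) < e / C"
    using l2_tendsto_Cauchy[OF assms(1-3)] by blast
  have "l2norm (vsub (Y m) (Y n)) < e" if "N \<le> m" "N \<le> n" for m n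
  proof -
    have "l2norm (vsub (X m) (X n)) < e / C"
      using N that by blast
    then have "C * l2norm (vsub (X m) (X n)) < e"
      using assms(5) by (simp add: pos_less_divide_eq mult.commute)
    then show ?thesis
      using assms(6)[of m n] by linarith
  qed
  then show "\<exists>N. \<forall>m\<ge>N. \<forall>n\<ge>N. l2norm (vsub (Y m) (Y n)) < e"
    by blast
qed (rule assms(4))

section \<open>Orthogonal projection and Riesz representation\<close>

definition l2_subspace :: "vec set \<Rightarrow> bool" where
  "l2_subspace M \<longleftrightarrow> M \<subseteq> l2 \<and> vzero \<in> M \<and> (\<forall>x\<in>M. \<forall>y\<in>M. vadd x y \<in> M) \<and> (\<forall>c. \<forall>x\<in>M. vsc c x \<in> M)"

lemma closed_subspace_l2: "closed_subspace H \<Longrightarrow> x \<in> H \<Longrightarrow> x \<in> l2"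
  and closed_subspace_vzero: "closed_subspace H \<Longrightarrow> vzero \<in> H"
  and closed_subspace_vadd: "closed_subspace H \<Longrightarrow> x \<in> H \<Longrightarrow> y \<in> H \<Longrightarrow> vadd x y \<in> H"
  and closed_subspace_vsc: "closed_subspace H \<Longrightarrow> x \<in> H \<Longrightarrow> vsc c x \<in> H"
  unfolding closed_subspace_def by blast+

lemma closed_subspace_vsub: "closed_subspace H \<Longrightarrow> x \<in> H \<Longrightarrow> y \<in> H \<Longrightarrow> vsub x y \<in> H"
  unfolding vsub_as_vadd by (intro closed_subspace_vadd closed_subspace_vsc)

lemma closed_subspace_closed:
  "closed_subspace H \<Longrightarrow> (\<And>k. X k \<in> H) \<Longrightarrow> x \<in> l2 \<Longrightarrow> l2_tendsto X x \<Longrightarrow> x \<in> H"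
  unfolding closed_subspace_def l2_tendsto_def by blast

lemma closed_subspace_UNIV: "closed_subspace l2"
  by (simp add: closed_subspace_def)

lemma closed_subspace_orthogonal_eq_vzero:
  "closed_subspace H \<Longrightarrow> w \<in> H \<Longrightarrow> (\<forall>y\<in>H. ip w y = 0) \<Longrightarrow> w = vzero"
  using ip_self_eq_zero_iff closed_subspace_l2 by blast

lemma closed_subspace_ip_eqI:
  assumes "closed_subspace H" "w \<in> H" "w' \<in> H" "\<forall>y\<in>H. ip w y = ip w' y"
  shows "w = w'"
proof -
  have "\<forall>y\<in>H. ip (vsub w w') y = 0"
    using assms by (simp add: ip_vsub_left closed_subspace_l2)
  then show ?thesis
    using closed_subspace_orthogonal_eq_vzero[OF assms(1) closed_subspace_vsub[OF assms(1-3)]] by simp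
qed

lemma l2norm_vsub_tendsto:
  assumes "\<And>k. X k \<in> l2" "p \<in> l2" "h \<in> l2" "l2_tendsto X p"
  shows "(\<lambda>k. l2norm (vsub h (X k))) \<longlonglongrightarrow> l2norm (vsub h p)"
proof -
  have "\<bar>l2norm (vsub h (X k)) - l2norm (vsub h p)\<bar> \<le> l2norm (vsub (X k) p)" for k
    using l2norm_triangle_vsub[of h "X k" p] l2norm_triangle_vsub[of h p "X k"]
      l2norm_vsub_commute[of p "X k"] assms(1-3) by simp
  then have "\<forall>k. norm (l2norm (vsub h (X k)) - l2norm (vsub h p)) \<le> l2norm (vsub (X k) p)"
    by simp
  then have "(\<lambda>k. l2norm (vsub h (X k)) - l2norm (vsub h p)) \<longlonglongrightarrow> 0"
    using assms(4) unfolding l2_tendsto_def by (rule Lim_null_comparison[OF always_eventually])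
  then show ?thesis
    by (rule LIM_zero_cancel)
qed

lemma l2_tendsto_vadd_const: "l2_tendsto X p \<Longrightarrow> l2_tendsto (\<lambda>k. vadd (X k) c) (vadd p c)"
proof -
  have "vsub (vadd (X k) c) (vadd p c) = vsub (X k) p" for k
    by (simp add: fun_eq_iff)
  then show "l2_tendsto X p \<Longrightarrow> l2_tendsto (\<lambda>k. vadd (X k) c) (vadd p c)"
    by (simp add: l2_tendsto_def)
qed

text \<open>Test the minimality with \<open>t = s \<langle>w, m\<rangle>\<close> for small \<open>s > 0\<close>.\<close>

lemma orthogonal_if_minimal_norm:
  assumes w: "w \<in> l2" and m: "m \<in> l2" and min: "\<And>t. l2norm w \<le> l2norm (vsub w (vsc t m))"
  shows "ip w m = 0"
proof -
  define q where "q = ip w m"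
  define n where "n = (l2norm m)^2"
  define s where "s = 1 / (n + 1)"
  have "0 \<le> n"
    by (simp add: n_def)
  then have s: "0 < s" "s * n \<le> 1"
    by (auto simp: s_def field_simps)
  define t where "t = complex_of_real s * q"
  have "ip w (vsc t m) = complex_of_real s * (cnj q * q)"
    using w m by (simp add: ip_vsc_right t_def q_def mult.assoc)
  also have "cnj q * q = complex_of_real ((cmod q)^2)"
    by (metis complex_norm_square mult.commute)
  finally have ip_t: "Re (ip w (vsc t m)) = s * (cmod q)^2"
    by (simp only: of_real_mult[symmetric] Re_complex_of_real)
  have "(l2norm w)^2 \<le> (l2norm (vsub w (vsc t m)))^2"
    using min[of t] w by (intro power_mono) auto
  also have "\<dots> = (l2norm w)^2 - 2 * s * (cmod q)^2 + s^2 * (cmod q)^2 * n"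
    using w m ip_t s by (simp add: l2norm_square_vsub l2norm_vsc power_mult_distrib t_def norm_mult n_def)
  finally have "2 * s * (cmod q)^2 \<le> s * (cmod q)^2 * (s * n)"
    by (simp add: power2_eq_square algebra_simps)
  also have "\<dots> \<le> s * (cmod q)^2"
    using s by (simp add: mult_left_le)
  finally have "(cmod q)^2 \<le> 0"
    using s by (simp add: mult_le_0_iff)
  then show ?thesis
    by (simp add: q_def)
qed

lemma parallelogram_distance_bound:
  assumes M: "l2_subspace M" and h: "h \<in> l2" and x: "x \<in> M" and y: "y \<in> M"
    and d: "0 \<le> d" "\<And>m. m \<in> M \<Longrightarrow> d \<le> l2norm (vsub h m)"
  shows "(l2norm (vsub x y))^2 \<le> 2 * (l2norm (vsub h x))^2 + 2 * (l2norm (vsub h y))^2 - 4 * d^2"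
proof -
  have l2: "x \<in> l2" "y \<in> l2"
    using M x y by (auto simp: l2_subspace_def)
  define a b where "a = vsub h x" and "b = vsub h y"
  have ab: "a \<in> l2" "b \<in> l2"
    using h l2 by (simp_all add: a_def b_def)
  define mid where "mid = vsc (1/2) (vadd x y)"
  have mid: "mid \<in> M"
    using M x y by (simp add: mid_def l2_subspace_def)
  have "vadd a b = vsc 2 (vsub h mid)"
    by (simp add: a_def b_def mid_def fun_eq_iff algebra_simps)
  then have "l2norm (vadd a b) = 2 * l2norm (vsub h mid)"
    using h mid M by (simp add: l2norm_vsc l2_subspace_def subset_iff)
  then have "4 * d^2 \<le> (l2norm (vadd a b))^2"
    using d(2)[OF mid] d(1) by (simp add: power_mult_distrib power_mono)
  moreover have "vsub a b = vsub y x"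
    by (simp add: a_def b_def fun_eq_iff)
  then have "(l2norm (vadd a b))^2 + (l2norm (vsub y x))^2 = 2 * (l2norm a)^2 + 2 * (l2norm b)^2"
    using ab l2norm_square_vadd[OF ab] l2norm_square_vsub[OF ab] by (simp only:)
  moreover have "(l2norm (vsub x y))^2 = (l2norm (vsub y x))^2"
    using l2norm_vsub_commute[OF l2] by simp
  ultimately show ?thesis
    unfolding a_def b_def by linarith
qed

lemma minimizing_sequence_Cauchy:
  assumes M: "l2_subspace M" and h: "h \<in> l2" and X: "\<And>k. X k \<in> M"
    and d: "0 \<le> d" "\<And>m. m \<in> M \<Longrightarrow> d \<le> l2norm (vsub h m)"
    and approx: "\<And>k. l2norm (vsub h (X k)) < d + 1 / (real k + 1)"
    and e: "e > 0"
  shows "\<exists>N. \<forall>m\<ge>N. \<forall>n\<ge>N. l2norm (vsub (X m) (X n)) < e"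
proof -
  define c where "c = 2 * d + 1"
  have c: "c > 0"
    using d by (simp add: c_def)
  have square: "(l2norm (vsub h (X k)))^2 \<le> d^2 + c / (real k + 1)" for k
  proof -
    define \<delta> where "\<delta> = 1 / (real k + 1)"
    have \<delta>: "0 < \<delta>" "\<delta> \<le> 1"
      by (auto simp: \<delta>_def field_simps)
    have "(l2norm (vsub h (X k)))^2 \<le> (d + \<delta>)^2"
      using approx[of k] h X M by (intro power_mono) (auto simp: l2_subspace_def subset_iff \<delta>_def)
    also have "\<dots> = d^2 + (2 * d + \<delta>) * \<delta>"
      by (simp add: power2_eq_square algebra_simps)
    also have "\<dots> \<le> d^2 + c * \<delta>"
      using \<delta> d by (simp add: c_def)
    finally show ?thesis
      by (simp add: \<delta>_def)
  qed
  obtain N :: nat where N: "4 * c / e^2 < real N + 1"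
    using reals_Archimedean2 by (metis add.commute add_strict_increasing zero_less_one less_imp_le)
  have "l2norm (vsub (X m) (X n)) < e" if mn: "N \<le> m" "N \<le> n" for m n
  proof -
    have "2 * c / (real n + 1) \<le> 2 * c / (real N + 1)" "2 * c / (real m + 1) \<le> 2 * c / (real N + 1)"
      using mn c by (auto intro!: divide_left_mono)
    moreover have "4 * c / (real N + 1) < e^2"
      using N e c by (simp add: field_simps)
    moreover have "2 * c / (real N + 1) + 2 * c / (real N + 1) = 4 * c / (real N + 1)"
      by simp
    ultimately have "(l2norm (vsub (X m) (X n)))^2 < e^2"
      using parallelogram_distance_bound[OF M h X X d, of m n] square[of m] square[of n] by linarith
    then show ?thesis
      using e X M by (simp add: power_less_imp_less_base)
  qed
  then show ?thesis
    by blast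
qed

text \<open>\<open>M\<close> need not be closed, so the projection \<open>p\<close> is only a limit of elements of \<open>M\<close>.\<close>

lemma orthogonal_projection:
  assumes M: "l2_subspace M" and h: "h \<in> l2"
  shows "\<exists>p\<in>l2. (\<exists>X. (\<forall>k. X k \<in> M) \<and> l2_tendsto X p) \<and> (\<forall>m\<in>M. ip (vsub h p) m = 0)"
proof -
  have Ml2: "m \<in> M \<Longrightarrow> m \<in> l2" and M0: "vzero \<in> M" and Madd: "\<And>x y. x \<in> M \<Longrightarrow> y \<in> M \<Longrightarrow> vadd x y \<in> M"
    and Msc: "\<And>c x. x \<in> M \<Longrightarrow> vsc c x \<in> M" for m
    using M by (auto simp: l2_subspace_def)
  define d where "d = (INF m\<in>M. l2norm (vsub h m))"
  have bdd: "bdd_below ((\<lambda>m. l2norm (vsub h m)) ` M)"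
    using h Ml2 by (intro bdd_belowI[of _ 0]) auto
  have dle: "d \<le> l2norm (vsub h m)" if "m \<in> M" for m
    unfolding d_def using bdd that by (rule cINF_lower)
  have d0: "0 \<le> d"
    unfolding d_def using M0 h Ml2 by (intro cINF_greatest) auto
  have "\<exists>m\<in>M. l2norm (vsub h m) < d + 1 / (real k + 1)" for k
    using cINF_less_iff[OF _ bdd, of "d + 1 / (real k + 1)"] M0 unfolding d_def by fastforce
  then obtain X where X: "\<And>k. X k \<in> M" and Xd: "\<And>k. l2norm (vsub h (X k)) < d + 1 / (real k + 1)"
    by metis
  have Xl2: "X k \<in> l2" for k
    using X Ml2 by blast
  obtain p where p: "p \<in> l2" "l2_tendsto X p"
    using l2_complete[OF Xl2 minimizing_sequence_Cauchy[OF M h X d0 dle Xd]] by blast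
  have inv: "(\<lambda>k. d + 1 / (real k + 1)) \<longlonglongrightarrow> d"
    using tendsto_add[OF tendsto_const LIMSEQ_inverse_real_of_nat, of d]
    by (simp add: inverse_eq_divide add.commute)
  have "l2norm (vsub h p) \<le> d"
    using Xd by (intro LIMSEQ_le[OF l2norm_vsub_tendsto[OF Xl2 p(1) h p(2)] inv]) (simp add: less_imp_le)
  moreover have "d \<le> l2norm (vsub (vsub h p) (vsc t m))" if m: "m \<in> M" for m t
  proof -
    have "(\<lambda>k. l2norm (vsub h (vadd (X k) (vsc t m)))) \<longlonglongrightarrow> l2norm (vsub h (vadd p (vsc t m)))"
      using Xl2 p m Ml2 h by (intro l2norm_vsub_tendsto l2_tendsto_vadd_const) auto
    moreover have "vsub h (vadd p (vsc t m)) = vsub (vsub h p) (vsc t m)"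
      by (simp add: fun_eq_iff)
    ultimately show ?thesis
      using X m by (intro LIMSEQ_le_const) (auto intro!: dle Madd Msc)
  qed
  ultimately have "ip (vsub h p) m = 0" if "m \<in> M" for m
    using h p(1) Ml2 that by (intro orthogonal_if_minimal_norm) (auto intro: order_trans)
  then show ?thesis
    using p X by blast
qed

lemma approximable_if_orthogonal_to_complement:
  assumes H: "closed_subspace H" and M: "l2_subspace M" "M \<subseteq> H" and h: "h \<in> H"
    and orth: "\<And>v. v \<in> H \<Longrightarrow> (\<forall>m\<in>M. ip v m = 0) \<Longrightarrow> ip v h = 0"
  shows "\<exists>X. (\<forall>k. X k \<in> M) \<and> l2_tendsto X h"
proof -
  have hl: "h \<in> l2"
    using H h closed_subspace_l2 by blast
  obtain p X where p: "p \<in> l2" and X: "\<And>k. X k \<in> M" and Xp: "l2_tendsto X p"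
    and perp: "\<forall>m\<in>M. ip (vsub h p) m = 0"
    using orthogonal_projection[OF M(1) hl] by blast
  have Xl: "X k \<in> l2" for k
    using X M(2) H closed_subspace_l2 by blast
  have "p \<in> H"
    using closed_subspace_closed[OF H _ p Xp] X M(2) by blast
  then have "vsub h p \<in> H"
    using H h closed_subspace_vsub by blast
  then have "ip (vsub h p) h = 0"
    using orth perp by blast
  moreover have "ip (vsub h p) p = 0"
  proof -
    have "(\<lambda>k. ip (vsub h p) (X k)) \<longlonglongrightarrow> ip (vsub h p) p"
      using Xl p hl Xp by (intro ip_tendsto_right) auto
    moreover have "ip (vsub h p) (X k) = 0" for k
      using perp X by blast
    ultimately show ?thesis
      by (simp add: LIMSEQ_const_iff)
  qed
  ultimately have "ip (vsub h p) (vsub h p) = 0"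
    using hl p by (simp add: ip_vsub_right)
  then have "h = p"
    using hl p by (simp add: ip_self_eq_zero_iff)
  then show ?thesis
    using X Xp by blast
qed

lemma antilinear_vsub:
  assumes H: "closed_subspace H"
    and add: "\<And>u v. u \<in> H \<Longrightarrow> v \<in> H \<Longrightarrow> \<Phi> (vadd u v) = \<Phi> u + \<Phi> v"
    and scale: "\<And>k v. v \<in> H \<Longrightarrow> \<Phi> (vsc k v) = cnj k * \<Phi> v"
    and "u \<in> H" "v \<in> H"
  shows "\<Phi> (vsub v u) = \<Phi> v - \<Phi> u"
  using add[of v "vsc (-1) u"] scale[of u "-1"] closed_subspace_vsc[OF H] assms(4,5)
  by (simp add: vsub_as_vadd)

text \<open>\<open>\<Phi>(z)\<^sup>* v - \<Phi>(v)\<^sup>* z\<close> lies in the kernel of \<open>\<Phi>\<close>, to which \<open>z\<close> is orthogonal.\<close>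

lemma representer_orthogonal_to_kernel:
  assumes H: "closed_subspace H"
    and add: "\<And>u v. u \<in> H \<Longrightarrow> v \<in> H \<Longrightarrow> \<Phi> (vadd u v) = \<Phi> u + \<Phi> v"
    and scale: "\<And>k v. v \<in> H \<Longrightarrow> \<Phi> (vsc k v) = cnj k * \<Phi> v"
    and z: "z \<in> H" "\<Phi> z \<noteq> 0" and perp: "\<And>u. u \<in> H \<Longrightarrow> \<Phi> u = 0 \<Longrightarrow> ip z u = 0"
    and v: "v \<in> H"
  shows "ip (vsc (\<Phi> z / ip z z) z) v = \<Phi> v"
proof -
  have l2: "z \<in> l2" "v \<in> l2"
    using H z v closed_subspace_l2 by blast+
  have "\<Phi> vzero = 0"
    using scale[of vzero 0] closed_subspace_vzero[OF H] by (simp add: vsc_def vzero_def)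
  then have "ip z z \<noteq> 0"
    using z(2) l2 by (auto simp: ip_self_eq_zero_iff)
  define u where "u = vsub (vsc (cnj (\<Phi> z)) v) (vsc (cnj (\<Phi> v)) z)"
  have "u \<in> H" "\<Phi> u = 0"
    unfolding u_def using H v z antilinear_vsub[OF H add scale] scale
    by (simp_all add: closed_subspace_vsub closed_subspace_vsc mult.commute del: vsub_apply)
  then have "ip z u = 0"
    by (rule perp)
  moreover have "ip z u = \<Phi> z * ip z v - \<Phi> v * ip z z"
    unfolding u_def using l2 by (simp add: ip_vsub_right ip_vsc_right)
  ultimately show ?thesis
    using l2 \<open>ip z z \<noteq> 0\<close> by (simp add: ip_vsc_left field_simps)
qed

lemma riesz_representation:
  assumes H: "closed_subspace H"
    and add: "\<And>u v. u \<in> H \<Longrightarrow> v \<in> H \<Longrightarrow> \<Phi> (vadd u v) = \<Phi> u + \<Phi> v"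
    and scale: "\<And>k v. v \<in> H \<Longrightarrow> \<Phi> (vsc k v) = cnj k * \<Phi> v"
    and bounded: "\<And>v. v \<in> H \<Longrightarrow> cmod (\<Phi> v) \<le> C * l2norm v"
  shows "\<exists>w\<in>H. \<forall>v\<in>H. ip w v = \<Phi> v"
proof (cases "\<forall>v\<in>H. \<Phi> v = 0")
  case True
  then show ?thesis
    using closed_subspace_vzero[OF H] by (intro bexI[of _ vzero]) auto
next
  case False
  then obtain v0 where v0: "v0 \<in> H" "\<Phi> v0 \<noteq> 0"
    by blast
  have Hl: "v \<in> H \<Longrightarrow> v \<in> l2" for v
    using H closed_subspace_l2 by blast
  define N where "N = {v \<in> H. \<Phi> v = 0}"
  have "l2_subspace N"
    unfolding l2_subspace_def N_def using Hl add scale[of vzero 0] scale closed_subspace_vadd[OF H]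
      closed_subspace_vsc[OF H] closed_subspace_vzero[OF H]
    by (auto simp: vsc_def vzero_def)
  then obtain p X where p: "p \<in> l2" and XN: "\<And>k. X k \<in> N" and Xp: "l2_tendsto X p"
    and perp: "\<forall>m\<in>N. ip (vsub v0 p) m = 0"
    using orthogonal_projection Hl[OF v0(1)] by blast
  have pH: "p \<in> H"
    using closed_subspace_closed[OF H _ p Xp] XN by (auto simp: N_def)
  have "\<Phi> (vsub (X k) p) = - \<Phi> p" for k
    using antilinear_vsub[OF H add scale pH, of "X k"] XN[of k] by (simp add: N_def del: vsub_apply)
  then have "cmod (\<Phi> p) \<le> C * l2norm (vsub (X k) p)" for k
    using bounded[OF closed_subspace_vsub[OF H _ pH, of "X k"]] XN[of k] by (simp add: N_def del: vsub_apply)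
  moreover have "(\<lambda>k. C * l2norm (vsub (X k) p)) \<longlonglongrightarrow> 0"
    using Xp tendsto_mult_right_zero unfolding l2_tendsto_def by blast
  ultimately have "\<Phi> p = 0"
    using LIMSEQ_le_const[of _ 0 "cmod (\<Phi> p)"] by fastforce
  define z where "z = vsub v0 p"
  have z: "z \<in> H" "\<Phi> z \<noteq> 0"
    unfolding z_def using closed_subspace_vsub[OF H v0(1) pH] antilinear_vsub[OF H add scale pH v0(1)]
      \<open>\<Phi> p = 0\<close> v0(2) by (simp_all del: vsub_apply)
  show ?thesis
  proof
    show "vsc (\<Phi> z / ip z z) z \<in> H"
      using H z(1) by (rule closed_subspace_vsc)
    have "ip z u = 0" if "u \<in> H" "\<Phi> u = 0" for u
      using perp that unfolding N_def z_def by blast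
    then show "\<forall>v\<in>H. ip (vsc (\<Phi> z / ip z z) z) v = \<Phi> v"
      using representer_orthogonal_to_kernel[OF H add scale z] by blast
  qed
qed

section \<open>Continuity of kernels built from families on the disc\<close>

text \<open>The bounds satisfied by \<open>\<phi>(c) = pr\<^sub>1 \<circ> \<gamma>(c)\<close>, stated for an abstract family.\<close>

definition bounded_disc_family :: "vec set \<Rightarrow> (complex \<Rightarrow> vec \<Rightarrow> vec) \<Rightarrow> bool" where
  "bounded_disc_family H F \<longleftrightarrow>
     (\<forall>c v. cmod c < 1 \<longrightarrow> v \<in> H \<longrightarrow> F c v \<in> l2 \<and> (1 - (cmod c)^2) * (l2norm (F c v))^2 \<le> (l2norm v)^2) \<and>
     (\<forall>c c' v. cmod c < 1 \<longrightarrow> cmod c' < 1 \<longrightarrow> v \<in> H \<longrightarrow>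
        (1 - cmod c) * l2norm (vsub (F c v) (F c' v)) \<le> cmod (c - c') * l2norm (F c' v))"

lemma bounded_disc_family_uniform:
  assumes F: "bounded_disc_family H F" and v: "v \<in> H" "v \<in> l2"
    and c: "cmod c \<le> \<rho>" and c': "cmod c' \<le> \<rho>" and \<rho>: "\<rho> < 1"
  shows "F c v \<in> l2" and "(1 - \<rho>) * l2norm (F c v) \<le> l2norm v" and "(1 - \<rho>) * l2norm (F c' v) \<le> l2norm v"
    and "(1 - \<rho>)^2 * l2norm (vsub (F c v) (F c' v)) \<le> cmod (c - c') * l2norm v"
proof -
  have bound: "\<And>d. cmod d < 1 \<Longrightarrow> F d v \<in> l2 \<and> (1 - (cmod d)^2) * (l2norm (F d v))^2 \<le> (l2norm v)^2"
    and lip: "(1 - cmod c) * l2norm (vsub (F c v) (F c' v)) \<le> cmod (c - c') * l2norm (F c' v)"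
    using F v c c' \<rho> by (simp_all add: bounded_disc_family_def)
  show "F c v \<in> l2"
    using bound c \<rho> by simp
  have norm_le: "(1 - \<rho>) * l2norm (F d v) \<le> l2norm v" if d: "cmod d \<le> \<rho>" for d
  proof (rule power2_le_imp_le)
    have d1: "cmod d < 1"
      using d \<rho> by simp
    have "0 \<le> \<rho>"
      using d by (rule order_trans[OF norm_ge_zero])
    then have "(1 - \<rho>)^2 \<le> 1 - \<rho>"
      using \<rho> by (simp add: power2_eq_square mult_left_le)
    also have "\<dots> \<le> 1 - (cmod d)^2"
      using d d1 by (simp add: power2_eq_square mult_left_le_one_le order_trans[of _ "cmod d"])
    finally have "(1 - \<rho>)^2 * (l2norm (F d v))^2 \<le> (1 - (cmod d)^2) * (l2norm (F d v))^2"
      by (intro mult_right_mono) simp_all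
    then show "((1 - \<rho>) * l2norm (F d v))^2 \<le> (l2norm v)^2"
      using bound[OF d1] by (simp add: power_mult_distrib)
  qed (simp add: v)
  then show "(1 - \<rho>) * l2norm (F c v) \<le> l2norm v" "(1 - \<rho>) * l2norm (F c' v) \<le> l2norm v"
    using c c' by simp_all
  have l2: "F c v \<in> l2" "F c' v \<in> l2"
    using bound c c' \<rho> by simp_all
  have "(1 - \<rho>)^2 * l2norm (vsub (F c v) (F c' v)) \<le> (1 - \<rho>) * ((1 - cmod c) * l2norm (vsub (F c v) (F c' v)))"
    using c \<rho> l2 by (simp add: power2_eq_square mult_left_mono mult_right_mono)
  also have "\<dots> \<le> (1 - \<rho>) * (cmod (c - c') * l2norm (F c' v))"
    using lip \<rho> by (intro mult_left_mono) simp_all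
  also have "\<dots> = cmod (c - c') * ((1 - \<rho>) * l2norm (F c' v))"
    by simp
  also have "\<dots> \<le> cmod (c - c') * l2norm v"
    using norm_le[OF c'] by (intro mult_left_mono) simp_all
  finally show "(1 - \<rho>)^2 * l2norm (vsub (F c v) (F c' v)) \<le> cmod (c - c') * l2norm v" .
qed

text \<open>For a kernel with \<open>\<langle>W a b, v\<rangle> = \<langle>F(b\<^sup>*) y, G(a\<^sup>*) v\<rangle>\<close> and \<open>D = W a b - W l m\<close>,
  \<open>\<parallel>D\<parallel>\<^sup>2 = \<langle>F(b\<^sup>*) y - F(m\<^sup>*) y, G(a\<^sup>*) D\<rangle> + \<langle>F(m\<^sup>*) y, G(a\<^sup>*) D - G(l\<^sup>*) D\<rangle>\<close>.\<close>

lemma kernel_difference_estimate: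
  assumes H: "closed_subspace H" and F: "bounded_disc_family H' F" and y: "y \<in> H'" "y \<in> l2"
    and G: "bounded_disc_family H G"
    and W: "\<And>a b. cmod a < 1 \<Longrightarrow> cmod b < 1 \<Longrightarrow>
      W a b \<in> H \<and> (\<forall>v\<in>H. ip (W a b) v = ip (F (cnj b) y) (G (cnj a) v))"
    and \<rho>: "\<rho> < 1" and ab: "cmod a \<le> \<rho>" "cmod b \<le> \<rho>" and lm: "cmod l \<le> \<rho>" "cmod m \<le> \<rho>"
  shows "l2norm (vsub (W a b) (W l m)) \<le> (cmod (a - l) + cmod (b - m)) * l2norm y / (1 - \<rho>)^3"
proof -
  define r where "r = 1 - \<rho>"
  have r: "0 < r"
    using \<rho> by (simp add: r_def)
  define Y where "Y = l2norm y"
  have Y: "0 \<le> Y"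
    using y by (simp add: Y_def)
  have Wab: "W a b \<in> H" "\<forall>v\<in>H. ip (W a b) v = ip (F (cnj b) y) (G (cnj a) v)"
    and Wlm: "W l m \<in> H" "\<forall>v\<in>H. ip (W l m) v = ip (F (cnj m) y) (G (cnj l) v)"
    using W[of a b] W[of l m] ab lm \<rho> by simp_all
  define D where "D = vsub (W a b) (W l m)"
  have DH: "D \<in> H" and Dl: "D \<in> l2" and Wl: "W a b \<in> l2" "W l m \<in> l2"
    unfolding D_def using closed_subspace_vsub[OF H] closed_subspace_l2[OF H] Wab Wlm by simp_all
  define d where "d = l2norm D"
  have d: "0 \<le> d"
    using Dl by (simp add: d_def)
  define f1 f2 g1 g2 where "f1 = F (cnj b) y" and "f2 = F (cnj m) y"
    and "g1 = G (cnj a) D" and "g2 = G (cnj l) D"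
  have cnj_diff: "cmod (cnj b - cnj m) = cmod (b - m)" "cmod (cnj a - cnj l) = cmod (a - l)"
    by (metis complex_cnj_diff complex_mod_cnj)+
  have Fb: "f1 \<in> l2" "f2 \<in> l2" "r * l2norm f2 \<le> Y" "r^2 * l2norm (vsub f1 f2) \<le> cmod (b - m) * Y"
    using bounded_disc_family_uniform[OF F y, of "cnj b" \<rho> "cnj m"]
      bounded_disc_family_uniform[OF F y, of "cnj m" \<rho> "cnj m"] ab lm \<rho>
    unfolding f1_def f2_def r_def Y_def cnj_diff by simp_all
  have Gb: "g1 \<in> l2" "g2 \<in> l2" "r * l2norm g1 \<le> d" "r^2 * l2norm (vsub g1 g2) \<le> cmod (a - l) * d"
    using bounded_disc_family_uniform[OF G DH Dl, of "cnj a" \<rho> "cnj l"]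
      bounded_disc_family_uniform[OF G DH Dl, of "cnj l" \<rho> "cnj l"] ab lm \<rho>
    unfolding g1_def g2_def r_def d_def cnj_diff by simp_all
  have "ip D D = ip f1 g1 - ip f2 g2"
    using Wab Wlm DH Wl Dl by (simp add: D_def ip_vsub_left f1_def f2_def g1_def g2_def)
  also have "\<dots> = ip (vsub f1 f2) g1 + ip f2 (vsub g1 g2)"
    using Fb Gb by (simp add: ip_vsub_left ip_vsub_right)
  finally have "d^2 \<le> cmod (ip (vsub f1 f2) g1) + cmod (ip f2 (vsub g1 g2))"
    using Dl complex_Re_le_cmod[of "ip D D"] norm_triangle_ineq[of "ip (vsub f1 f2) g1" "ip f2 (vsub g1 g2)"]
    by (simp add: d_def l2norm_square_ip)
  also have "\<dots> \<le> l2norm (vsub f1 f2) * l2norm g1 + l2norm f2 * l2norm (vsub g1 g2)"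
    using Fb Gb by (intro add_mono ip_cauchy_schwarz) simp_all
  finally have "r^3 * d^2 \<le> r^3 * (l2norm (vsub f1 f2) * l2norm g1 + l2norm f2 * l2norm (vsub g1 g2))"
    using r by (intro mult_left_mono) simp_all
  also have "\<dots> = (r^2 * l2norm (vsub f1 f2)) * (r * l2norm g1) + (r * l2norm f2) * (r^2 * l2norm (vsub g1 g2))"
    by (simp add: power2_eq_square power3_eq_cube algebra_simps)
  also have "\<dots> \<le> (cmod (b - m) * Y) * d + Y * (cmod (a - l) * d)"
    by (rule add_mono[OF mult_mono[OF Fb(4) Gb(3)] mult_mono[OF Fb(3) Gb(4)]]) (use Y r Fb Gb in simp_all)
  finally have "r^3 * d * d \<le> ((cmod (a - l) + cmod (b - m)) * Y) * d"
    by (simp add: power2_eq_square algebra_simps)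
  then have "r^3 * d \<le> (cmod (a - l) + cmod (b - m)) * Y"
    using d Y by (cases "d = 0") (simp_all add: mult_le_cancel_right)
  then show ?thesis
    using r by (simp add: D_def d_def r_def Y_def field_simps)
qed

lemma kernel_continuous:
  assumes H: "closed_subspace H" and F: "bounded_disc_family H' F" and y: "y \<in> H'" "y \<in> l2"
    and G: "bounded_disc_family H G"
    and W: "\<And>a b. cmod a < 1 \<Longrightarrow> cmod b < 1 \<Longrightarrow>
      W a b \<in> H \<and> (\<forall>v\<in>H. ip (W a b) v = ip (F (cnj b) y) (G (cnj a) v))"
    and l: "cmod l < 1" and m: "cmod m < 1"
  shows "((\<lambda>(a, b). l2norm (vsub (W a b) (W l m))) \<longlongrightarrow> 0) (at (l, m) within U)"
proof -
  define \<rho> where "\<rho> = (1 + max (cmod l) (cmod m)) / 2"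
  have \<rho>: "\<rho> < 1" "cmod l < \<rho>" "cmod m < \<rho>"
    using l m by (auto simp: \<rho>_def max_def)
  define K where "K = l2norm y / (1 - \<rho>)^3"
  define e where "e = min (\<rho> - cmod l) (\<rho> - cmod m)"
  have "eventually (\<lambda>x. norm ((\<lambda>(a, b). l2norm (vsub (W a b) (W l m))) x)
      \<le> (cmod (fst x - l) + cmod (snd x - m)) * K) (at (l, m) within U)"
    unfolding eventually_at
  proof (intro exI[of _ e] conjI allI impI ballI)
    show "0 < e"
      using \<rho> by (simp add: e_def)
    fix x :: "complex \<times> complex"
    assume "x \<in> U" "x \<noteq> (l, m) \<and> dist x (l, m) < e"
    then have "dist (fst x) l < e" "dist (snd x) m < e"
      using dist_fst_le[of x "(l, m)"] dist_snd_le[of x "(l, m)"] by simp_all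
    then have x: "cmod (fst x) \<le> \<rho>" "cmod (snd x) \<le> \<rho>"
      using norm_triangle_ineq2[of "fst x" l] norm_triangle_ineq2[of "snd x" m]
      by (simp_all add: dist_norm e_def)
    have "W (fst x) (snd x) \<in> l2" "W l m \<in> l2"
      using W[of "fst x" "snd x"] W[OF l m] x \<rho> H closed_subspace_l2 by simp_all
    then show "norm ((\<lambda>(a, b). l2norm (vsub (W a b) (W l m))) x) \<le> (cmod (fst x - l) + cmod (snd x - m)) * K"
      using kernel_difference_estimate[OF H F y G W \<rho>(1) x] \<rho>
      by (simp add: case_prod_beta K_def less_imp_le)
  qed
  moreover have "((\<lambda>x. (cmod (fst x - l) + cmod (snd x - m)) * K) \<longlongrightarrow> (cmod (l - l) + cmod (m - m)) * K)
      (at (l, m) within U)"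
    by (intro tendsto_intros tendsto_fst[OF tendsto_ident_at, of "(l, m)", simplified]
        tendsto_snd[OF tendsto_ident_at, of "(l, m)", simplified])
  then have "((\<lambda>x. (cmod (fst x - l) + cmod (snd x - m)) * K) \<longlongrightarrow> 0) (at (l, m) within U)"
    by simp
  ultimately show ?thesis
    by (rule Lim_null_comparison)
qed

lemma l2norm_tendsto_within_cong:
  assumes "\<And>a b. (a, b) \<in> U \<Longrightarrow> f a b = g a b"
    and "((\<lambda>(a, b). l2norm (vsub (g a b) w)) \<longlongrightarrow> 0) (at x within U)"
  shows "((\<lambda>(a, b). l2norm (vsub (f a b) w)) \<longlongrightarrow> 0) (at x within U)"
proof -
  have "eventually (\<lambda>p. (\<lambda>(a, b). l2norm (vsub (g a b) w)) p = (\<lambda>(a, b). l2norm (vsub (f a b) w)) p)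
      (at x within U)"
    unfolding eventually_at_filter using assms(1) by (intro always_eventually) auto
  then show ?thesis
    using assms(2) by (rule tendsto_cong[THEN iffD1])
qed

section \<open>Boundary quadruples\<close>

definition l2_pair :: "vec \<times> vec \<Rightarrow> bool" where
  "l2_pair a \<longleftrightarrow> fst a \<in> l2 \<and> snd a \<in> l2"

definition psub :: "vec \<times> vec \<Rightarrow> vec \<times> vec \<Rightarrow> vec \<times> vec" where
  "psub a b = (vsub (fst a) (fst b), vsub (snd a) (snd b))"

lemma fst_psub [simp]: "fst (psub a b) = vsub (fst a) (fst b)"
  and snd_psub [simp]: "snd (psub a b) = vsub (snd a) (snd b)"
  by (simp_all add: psub_def)

lemma psub_as_padd: "psub a b = padd a (psc (-1) b)"
  by (simp add: psub_def padd_def psc_def vsub_as_vadd)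

lemma l2_pair_padd: "l2_pair a \<Longrightarrow> l2_pair b \<Longrightarrow> l2_pair (padd a b)"
  and l2_pair_psc: "l2_pair a \<Longrightarrow> l2_pair (psc c a)"
  and l2_pair_psub: "l2_pair a \<Longrightarrow> l2_pair b \<Longrightarrow> l2_pair (psub a b)"
  by (simp_all add: l2_pair_def padd_def psc_def psub_def)

lemma sform_padd_left: "l2_pair a \<Longrightarrow> l2_pair b \<Longrightarrow> l2_pair c \<Longrightarrow> sform (padd a b) c = sform a c + sform b c"
  and sform_psc_left: "l2_pair a \<Longrightarrow> l2_pair c \<Longrightarrow> sform (psc k a) c = k * sform a c"
  and sform_psub_left: "l2_pair a \<Longrightarrow> l2_pair b \<Longrightarrow> l2_pair c \<Longrightarrow> sform (psub a b) c = sform a c - sform b c"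
  by (simp_all add: l2_pair_def sform_def padd_def psc_def psub_def ip_linear algebra_simps)

lemma sform_swap: "sform (prod.swap a) (prod.swap b) = - sform a b"
  by (simp add: sform_def)

lemma sform_graphs:
  assumes "x \<in> l2" "x' \<in> l2"
  shows "sform (x, vsc c x) (x', vsc d x') = \<i> * ((1 - c * cnj d) * ip x x')"
    and "sform (vsc c x, x) (vsc d x', x') = \<i> * ((c * cnj d - 1) * ip x x')"
    and "sform (x, vsc c x) (vsc d x', x') = \<i> * ((cnj d - c) * ip x x')"
    and "sform (vsc c x, x) (x', vsc d x') = \<i> * ((c - cnj d) * ip x x')"
  using assms by (simp_all add: sform_def ip_linear algebra_simps)

lemma sform_self: "l2_pair a \<Longrightarrow> sform a a = \<i> * complex_of_real ((l2norm (fst a))^2 - (l2norm (snd a))^2)"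
  by (simp add: sform_def l2_pair_def ip_self algebra_simps)

lemma sform_graph_left:
  "v \<in> l2 \<Longrightarrow> l2_pair e \<Longrightarrow> sform (v, vsc c v) e = \<i> * ip v (vsub (fst e) (vsc (cnj c) (snd e)))"
  by (simp add: sform_def l2_pair_def ip_linear algebra_simps)

lemma sperp_iff: "a \<in> sperp A \<longleftrightarrow> l2_pair a \<and> (\<forall>b\<in>A. sform a b = 0)"
  by (simp add: sperp_def l2_pair_def)

lemma sperp_vzero: "(vzero, vzero) \<in> sperp A"
  by (simp add: sperp_iff l2_pair_def sform_def)

lemma mem_swap_image: "a \<in> prod.swap ` X \<longleftrightarrow> prod.swap a \<in> X"
  by (cases a) simp

lemma sperp_swap: "sperp (prod.swap ` A) = prod.swap ` sperp A"
proof -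
  have "a \<in> sperp (prod.swap ` A) \<longleftrightarrow> prod.swap a \<in> sperp A" for a
    using sform_swap[of "prod.swap a"] by (auto simp: sperp_iff l2_pair_def)
  then show ?thesis
    by (auto simp: mem_swap_image)
qed

text \<open>The axioms of a boundary quadruple for \<open>A\<^sup>\<perp>\<^sup>s\<close>, with \<open>A\<close> an arbitrary set of pairs:
  this generality makes the roles of \<open>\<Gamma>\<^sub>+\<close> and \<open>\<Gamma>\<^sub>-\<close> symmetric under the swap of the two
  components, so that statements about \<open>\<bbbD>\<^sub>-\<close> follow from those about \<open>\<bbbD>\<^sub>+\<close>.\<close>

locale abstract_boundary_quadruple =
  fixes A :: "(vec \<times> vec) set" and H1 H2 :: "vec set" and G1 G2 :: "vec \<times> vec \<Rightarrow> vec"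
  assumes closed_H1: "closed_subspace H1" and closed_H2: "closed_subspace H2"
    and G_mem: "\<forall>a\<in>sperp A. G1 a \<in> H1 \<and> G2 a \<in> H2"
    and G_padd: "\<forall>a\<in>sperp A. \<forall>b\<in>sperp A. G1 (padd a b) = vadd (G1 a) (G1 b) \<and> G2 (padd a b) = vadd (G2 a) (G2 b)"
    and G_psc: "\<forall>c. \<forall>a\<in>sperp A. G1 (psc c a) = vsc c (G1 a) \<and> G2 (psc c a) = vsc c (G2 a)"
    and G_bounded: "\<exists>C. \<forall>a\<in>sperp A.
       (l2norm (G1 a))^2 + (l2norm (G2 a))^2 \<le> C * ((l2norm (fst a))^2 + (l2norm (snd a))^2)"
    and G_surj: "\<forall>x\<in>H1. \<forall>y\<in>H2. \<exists>a\<in>sperp A. G1 a = x \<and> G2 a = y"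
    and G_kernel: "{a \<in> sperp A. G1 a = vzero \<and> G2 a = vzero} = A"
    and green: "\<forall>a\<in>sperp A. \<forall>b\<in>sperp A. sform a b = \<i> * ip (G1 a) (G1 b) - \<i> * ip (G2 a) (G2 b)"

lemma boundary_quadruple_abstract:
  "boundary_quadruple T Hp Hm Gp Gm \<Longrightarrow> abstract_boundary_quadruple (A_T T) Hp Hm Gp Gm"
  unfolding boundary_quadruple_def abstract_boundary_quadruple_def by blast

lemma abstract_boundary_quadruple_swap:
  assumes "abstract_boundary_quadruple A H1 H2 G1 G2"
  shows "abstract_boundary_quadruple (prod.swap ` A) H2 H1 (G2 \<circ> prod.swap) (G1 \<circ> prod.swap)"
proof -
  interpret abstract_boundary_quadruple A H1 H2 G1 G2
    by (fact assms)
  have mem: "a \<in> sperp (prod.swap ` A) \<longleftrightarrow> prod.swap a \<in> sperp A" for a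
    by (simp add: sperp_swap mem_swap_image)
  have swap_padd: "prod.swap (padd a b) = padd (prod.swap a) (prod.swap b)"
    and swap_psc: "prod.swap (psc c a) = psc c (prod.swap a)" for a b c
    by (simp_all add: padd_def psc_def)
  have kernel: "a \<in> A \<longleftrightarrow> a \<in> sperp A \<and> G1 a = vzero \<and> G2 a = vzero" for a
    using G_kernel by blast
  show ?thesis
  proof
    obtain C where C: "\<forall>a\<in>sperp A.
        (l2norm (G1 a))^2 + (l2norm (G2 a))^2 \<le> C * ((l2norm (fst a))^2 + (l2norm (snd a))^2)"
      using G_bounded by blast
    show "\<exists>C. \<forall>a\<in>sperp (prod.swap ` A). (l2norm ((G2 \<circ> prod.swap) a))^2
        + (l2norm ((G1 \<circ> prod.swap) a))^2 \<le> C * ((l2norm (fst a))^2 + (l2norm (snd a))^2)"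
    proof (intro exI ballI)
      fix a
      assume "a \<in> sperp (prod.swap ` A)"
      then show "(l2norm ((G2 \<circ> prod.swap) a))^2 + (l2norm ((G1 \<circ> prod.swap) a))^2
          \<le> C * ((l2norm (fst a))^2 + (l2norm (snd a))^2)"
        using C[rule_format, of "prod.swap a"] mem by (simp add: algebra_simps)
    qed
    show "{a \<in> sperp (prod.swap ` A). (G2 \<circ> prod.swap) a = vzero \<and> (G1 \<circ> prod.swap) a = vzero}
        = prod.swap ` A"
      using kernel by (auto simp: mem mem_swap_image)
    show "\<forall>a\<in>sperp (prod.swap ` A). \<forall>b\<in>sperp (prod.swap ` A). sform a b
        = \<i> * ip ((G2 \<circ> prod.swap) a) ((G2 \<circ> prod.swap) b) - \<i> * ip ((G1 \<circ> prod.swap) a) ((G1 \<circ> prod.swap) b)"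
    proof (intro ballI)
      fix a b
      assume "a \<in> sperp (prod.swap ` A)" "b \<in> sperp (prod.swap ` A)"
      then have "sform (prod.swap a) (prod.swap b)
          = \<i> * ip (G1 (prod.swap a)) (G1 (prod.swap b)) - \<i> * ip (G2 (prod.swap a)) (G2 (prod.swap b))"
        using green mem by blast
      then show "sform a b = \<i> * ip ((G2 \<circ> prod.swap) a) ((G2 \<circ> prod.swap) b)
          - \<i> * ip ((G1 \<circ> prod.swap) a) ((G1 \<circ> prod.swap) b)"
        using sform_swap[of a b] by (simp add: algebra_simps)
    qed
    show "\<forall>x\<in>H2. \<forall>y\<in>H1. \<exists>a\<in>sperp (prod.swap ` A). (G2 \<circ> prod.swap) a = x \<and> (G1 \<circ> prod.swap) a = y"
    proof (intro ballI)
      fix x y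
      assume "x \<in> H2" "y \<in> H1"
      then obtain a where "a \<in> sperp A" "G1 a = y" "G2 a = x"
        using G_surj by blast
      then show "\<exists>a\<in>sperp (prod.swap ` A). (G2 \<circ> prod.swap) a = x \<and> (G1 \<circ> prod.swap) a = y"
        by (intro bexI[of _ "prod.swap a"]) (simp_all add: mem)
    qed
  qed (use closed_H1 closed_H2 G_mem G_padd G_psc in \<open>auto simp: mem swap_padd swap_psc\<close>)
qed

context abstract_boundary_quadruple
begin

lemma sperp_l2_pair: "a \<in> sperp A \<Longrightarrow> l2_pair a"
  and sperp_fst_l2: "a \<in> sperp A \<Longrightarrow> fst a \<in> l2"
  and sperp_snd_l2: "a \<in> sperp A \<Longrightarrow> snd a \<in> l2"
  by (simp_all add: sperp_iff l2_pair_def)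

lemma G1_mem: "a \<in> sperp A \<Longrightarrow> G1 a \<in> H1"
  and G1_l2: "a \<in> sperp A \<Longrightarrow> G1 a \<in> l2"
  and G2_l2: "a \<in> sperp A \<Longrightarrow> G2 a \<in> l2"
  using G_mem closed_H1 closed_H2 closed_subspace_l2 by blast+

lemma green_sperp: "a \<in> sperp A \<Longrightarrow> b \<in> sperp A \<Longrightarrow> sform a b = \<i> * ip (G1 a) (G1 b) - \<i> * ip (G2 a) (G2 b)"
  using green by blast

lemma mem_A_iff: "a \<in> A \<longleftrightarrow> a \<in> sperp A \<and> G1 a = vzero \<and> G2 a = vzero"
  using G_kernel by blast

lemma sperp_padd: "a \<in> sperp A \<Longrightarrow> b \<in> sperp A \<Longrightarrow> padd a b \<in> sperp A"
  and sperp_psc: "a \<in> sperp A \<Longrightarrow> psc c a \<in> sperp A"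
  and sperp_psub: "a \<in> sperp A \<Longrightarrow> b \<in> sperp A \<Longrightarrow> psub a b \<in> sperp A"
proof -
  have A: "\<And>e. e \<in> A \<Longrightarrow> l2_pair e"
    using mem_A_iff sperp_l2_pair by blast
  show "a \<in> sperp A \<Longrightarrow> b \<in> sperp A \<Longrightarrow> padd a b \<in> sperp A"
    and "a \<in> sperp A \<Longrightarrow> psc c a \<in> sperp A"
    and "a \<in> sperp A \<Longrightarrow> b \<in> sperp A \<Longrightarrow> psub a b \<in> sperp A"
    using A by (simp_all add: sperp_iff l2_pair_padd l2_pair_psc l2_pair_psub
        sform_padd_left sform_psc_left sform_psub_left)
qed

lemma G1_padd: "a \<in> sperp A \<Longrightarrow> b \<in> sperp A \<Longrightarrow> G1 (padd a b) = vadd (G1 a) (G1 b)"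
  and G2_padd: "a \<in> sperp A \<Longrightarrow> b \<in> sperp A \<Longrightarrow> G2 (padd a b) = vadd (G2 a) (G2 b)"
  and G1_psc: "a \<in> sperp A \<Longrightarrow> G1 (psc c a) = vsc c (G1 a)"
  and G2_psc: "a \<in> sperp A \<Longrightarrow> G2 (psc c a) = vsc c (G2 a)"
  using G_padd G_psc by blast+

lemma G1_psub: "a \<in> sperp A \<Longrightarrow> b \<in> sperp A \<Longrightarrow> G1 (psub a b) = vsub (G1 a) (G1 b)"
  and G2_psub: "a \<in> sperp A \<Longrightarrow> b \<in> sperp A \<Longrightarrow> G2 (psub a b) = vsub (G2 a) (G2 b)"
  by (simp_all add: psub_as_padd G1_padd G2_padd G1_psc G2_psc sperp_psc vsub_as_vadd)

lemma G_vzero: "G1 (vzero, vzero) = vzero" "G2 (vzero, vzero) = vzero"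
proof -
  have "psc 0 (vzero, vzero) = (vzero, vzero)"
    by (simp add: psc_def fun_eq_iff)
  then show "G1 (vzero, vzero) = vzero" "G2 (vzero, vzero) = vzero"
    using G1_psc[OF sperp_vzero, of 0] G2_psc[OF sperp_vzero, of 0] by (simp_all add: fun_eq_iff)
qed

lemma A_padd: "a \<in> A \<Longrightarrow> b \<in> A \<Longrightarrow> padd a b \<in> A"
  and A_psc: "a \<in> A \<Longrightarrow> psc c a \<in> A"
  and A_psub: "a \<in> A \<Longrightarrow> b \<in> A \<Longrightarrow> psub a b \<in> A"
  and A_vzero: "(vzero, vzero) \<in> A"
  by (simp_all add: mem_A_iff sperp_padd sperp_psc sperp_psub sperp_vzero
      G1_padd G2_padd G1_psc G2_psc G1_psub G2_psub G_vzero) (simp_all add: fun_eq_iff)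

lemma sperp_norm_identity:
  assumes "a \<in> sperp A"
  shows "(l2norm (fst a))^2 - (l2norm (snd a))^2 = (l2norm (G1 a))^2 - (l2norm (G2 a))^2"
proof -
  have "\<i> * complex_of_real ((l2norm (fst a))^2 - (l2norm (snd a))^2)
      = \<i> * complex_of_real ((l2norm (G1 a))^2 - (l2norm (G2 a))^2)"
    using sform_self[OF sperp_l2_pair[OF assms]] green_sperp[OF assms assms] G1_l2[OF assms] G2_l2[OF assms]
    by (simp add: ip_self algebra_simps)
  then show ?thesis
    by (simp only: mult_cancel_left complex_i_not_zero of_real_eq_iff simp_thms)
qed

lemma A_norm_eq: "a \<in> A \<Longrightarrow> l2norm (fst a) = l2norm (snd a)"
  using sperp_norm_identity[of a] sperp_fst_l2[of a] sperp_snd_l2[of a]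
  by (simp add: mem_A_iff power2_eq_iff_nonneg)

lemma G1_vzero_norm_le:
  assumes "a \<in> sperp A" "G1 a = vzero"
  shows "l2norm (fst a) \<le> l2norm (snd a)"
proof (rule power2_le_imp_le)
  show "(l2norm (fst a))^2 \<le> (l2norm (snd a))^2"
  proof -
    have "(l2norm (fst a))^2 - (l2norm (snd a))^2 = - ((l2norm (G2 a))^2)"
      using sperp_norm_identity[OF assms(1)] assms(2) by simp
    then show ?thesis
      using zero_le_power2[of "l2norm (G2 a)"] by linarith
  qed
qed (simp add: sperp_snd_l2[OF assms(1)])

lemma G_norm_bound:
  obtains K where "K \<ge> 0"
    and "\<And>a. a \<in> sperp A \<Longrightarrow> l2norm (G1 a) \<le> K * (l2norm (fst a) + l2norm (snd a))"
    and "\<And>a. a \<in> sperp A \<Longrightarrow> l2norm (G2 a) \<le> K * (l2norm (fst a) + l2norm (snd a))"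
proof -
  obtain C where C: "\<forall>a\<in>sperp A.
      (l2norm (G1 a))^2 + (l2norm (G2 a))^2 \<le> C * ((l2norm (fst a))^2 + (l2norm (snd a))^2)"
    using G_bounded by blast
  define K where "K = sqrt (max C 0)"
  have "l2norm (G1 a) \<le> K * (l2norm (fst a) + l2norm (snd a)) \<and>
        l2norm (G2 a) \<le> K * (l2norm (fst a) + l2norm (snd a))" if a: "a \<in> sperp A" for a
  proof -
    have nonneg: "0 \<le> l2norm (fst a)" "0 \<le> l2norm (snd a)" "0 \<le> l2norm (G1 a)" "0 \<le> l2norm (G2 a)"
      using a by (simp_all add: sperp_fst_l2 sperp_snd_l2 G1_l2 G2_l2)
    have "C * ((l2norm (fst a))^2 + (l2norm (snd a))^2) \<le> max C 0 * (l2norm (fst a) + l2norm (snd a))^2"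
      using nonneg by (intro mult_mono) (auto simp: power2_sum)
    also have "\<dots> = (K * (l2norm (fst a) + l2norm (snd a)))^2"
      by (simp add: K_def power_mult_distrib)
    finally have "(l2norm (G1 a))^2 + (l2norm (G2 a))^2 \<le> (K * (l2norm (fst a) + l2norm (snd a)))^2"
      using C a by fastforce
    then have "(l2norm (G1 a))^2 \<le> (K * (l2norm (fst a) + l2norm (snd a)))^2"
      and "(l2norm (G2 a))^2 \<le> (K * (l2norm (fst a) + l2norm (snd a)))^2"
      using zero_le_power2[of "l2norm (G1 a)"] zero_le_power2[of "l2norm (G2 a)"] by linarith+
    then show ?thesis
      using nonneg by (auto simp: K_def intro!: power2_le_imp_le)
  qed
  then show ?thesis
    using that[of K] by (simp add: K_def)
qed

lemma G_tendsto:
  assumes a: "\<And>k. a k \<in> sperp A" and b: "b \<in> sperp A"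
    and fst: "l2_tendsto (\<lambda>k. fst (a k)) (fst b)" and snd: "l2_tendsto (\<lambda>k. snd (a k)) (snd b)"
  shows "l2_tendsto (\<lambda>k. G1 (a k)) (G1 b)" and "l2_tendsto (\<lambda>k. G2 (a k)) (G2 b)"
proof -
  obtain K where K: "K \<ge> 0"
    "\<And>a. a \<in> sperp A \<Longrightarrow> l2norm (G1 a) \<le> K * (l2norm (fst a) + l2norm (snd a))"
    "\<And>a. a \<in> sperp A \<Longrightarrow> l2norm (G2 a) \<le> K * (l2norm (fst a) + l2norm (snd a))"
    using G_norm_bound by blast
  define s where "s k = l2norm (vsub (fst (a k)) (fst b)) + l2norm (vsub (snd (a k)) (snd b))" for k
  have lim: "(\<lambda>k. K * s k) \<longlonglongrightarrow> 0"
    using tendsto_mult_right_zero[OF tendsto_add_zero[OF fst[unfolded l2_tendsto_def] snd[unfolded l2_tendsto_def]]]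
    by (simp add: s_def)
  have "l2norm (vsub (G1 (a k)) (G1 b)) \<le> K * s k" "l2norm (vsub (G2 (a k)) (G2 b)) \<le> K * s k" for k
    using K(2,3)[OF sperp_psub[OF a b], unfolded G1_psub[OF a b] G2_psub[OF a b]]
    by (simp_all add: s_def psub_def)
  then have bound1: "\<forall>k. norm (l2norm (vsub (G1 (a k)) (G1 b))) \<le> K * s k"
    and bound2: "\<forall>k. norm (l2norm (vsub (G2 (a k)) (G2 b))) \<le> K * s k"
    using a b by (simp_all add: G1_l2 G2_l2)
  show "l2_tendsto (\<lambda>k. G1 (a k)) (G1 b)"
    unfolding l2_tendsto_def by (rule Lim_null_comparison[OF always_eventually lim]) (rule bound1)
  show "l2_tendsto (\<lambda>k. G2 (a k)) (G2 b)"
    unfolding l2_tendsto_def by (rule Lim_null_comparison[OF always_eventually lim]) (rule bound2)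
qed

lemma sperp_closed:
  assumes a: "\<And>k. a k \<in> sperp A" and "f \<in> l2" "g \<in> l2"
    and "l2_tendsto (\<lambda>k. fst (a k)) f" "l2_tendsto (\<lambda>k. snd (a k)) g"
  shows "(f, g) \<in> sperp A"
proof -
  have "sform (f, g) b = 0" if b: "b \<in> A" for b
  proof -
    have "fst b \<in> l2" "snd b \<in> l2"
      using b by (simp_all add: mem_A_iff sperp_fst_l2 sperp_snd_l2)
    then have "(\<lambda>k. ip (fst (a k)) (fst b)) \<longlonglongrightarrow> ip f (fst b)"
      and "(\<lambda>k. ip (snd (a k)) (snd b)) \<longlonglongrightarrow> ip g (snd b)"
      using assms sperp_fst_l2[OF a] sperp_snd_l2[OF a] by (auto intro: ip_tendsto_left)
    then have "(\<lambda>k. sform (a k) b) \<longlonglongrightarrow> sform (f, g) b"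
      unfolding sform_def by (intro tendsto_diff tendsto_mult_left) simp_all
    moreover have "sform (a k) b = 0" for k
      using a b by (simp add: sperp_iff)
    ultimately show ?thesis
      by (simp add: LIMSEQ_const_iff)
  qed
  then show ?thesis
    using assms by (simp add: sperp_iff l2_pair_def)
qed

lemma A_closed:
  assumes E: "\<And>k. E k \<in> A" and "f \<in> l2" "g \<in> l2"
    and "l2_tendsto (\<lambda>k. fst (E k)) f" "l2_tendsto (\<lambda>k. snd (E k)) g"
  shows "(f, g) \<in> A"
proof -
  have E': "E k \<in> sperp A" for k
    using E by (simp add: mem_A_iff)
  have fg: "(f, g) \<in> sperp A"
    by (rule sperp_closed[OF E' assms(2-5)])
  have "l2_tendsto (\<lambda>k. G1 (E k)) (G1 (f, g))" "l2_tendsto (\<lambda>k. G2 (E k)) (G2 (f, g))"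
    using G_tendsto[OF E' fg] assms by simp_all
  then have "l2_tendsto (\<lambda>k. vzero) (G1 (f, g))" "l2_tendsto (\<lambda>k. vzero) (G2 (f, g))"
    using E by (simp_all add: mem_A_iff)
  then have "G1 (f, g) = vzero" "G2 (f, g) = vzero"
    using l2_tendsto_unique[of "\<lambda>k. vzero", OF _ _ _ _ l2_tendsto_const] G1_l2[OF fg] G2_l2[OF fg]
    by simp_all
  then show ?thesis
    using fg by (simp add: mem_A_iff)
qed

end

section \<open>Defect spaces\<close>

definition defect_space :: "(vec \<times> vec) set \<Rightarrow> complex \<Rightarrow> (vec \<times> vec) set" where
  "defect_space A c = {(x, vsc c x) | x. x \<in> l2} \<inter> sperp A"

lemma defect_space_iff: "a \<in> defect_space A c \<longleftrightarrow> a \<in> sperp A \<and> snd a = vsc c (fst a)"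
  by (cases a) (auto simp: defect_space_def sperp_iff l2_pair_def)

context abstract_boundary_quadruple
begin

lemma defect_space_padd: "a \<in> defect_space A c \<Longrightarrow> b \<in> defect_space A c \<Longrightarrow> padd a b \<in> defect_space A c"
  and defect_space_psc: "a \<in> defect_space A c \<Longrightarrow> psc k a \<in> defect_space A c"
  and defect_space_psub: "a \<in> defect_space A c \<Longrightarrow> b \<in> defect_space A c \<Longrightarrow> psub a b \<in> defect_space A c"
  and defect_space_vzero: "(vzero, vzero) \<in> defect_space A c"
  by (simp_all add: defect_space_iff sperp_padd sperp_psc sperp_psub sperp_vzero)
    (simp_all add: padd_def psc_def psub_def fun_eq_iff algebra_simps)

lemma defect_space_norm_identity:
  assumes "a \<in> defect_space A c"
  shows "(1 - (cmod c)^2) * (l2norm (fst a))^2 = (l2norm (G1 a))^2 - (l2norm (G2 a))^2"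
proof -
  have "a \<in> sperp A" "snd a = vsc c (fst a)"
    using assms by (simp_all add: defect_space_iff)
  then show ?thesis
    using sperp_norm_identity[of a] sperp_fst_l2[of a]
    by (simp add: l2norm_vsc power_mult_distrib algebra_simps)
qed

lemma defect_space_norm_le:
  "a \<in> defect_space A c \<Longrightarrow> (1 - (cmod c)^2) * (l2norm (fst a))^2 \<le> (l2norm (G1 a))^2"
  using defect_space_norm_identity[of a c] by simp

lemma defect_space_G1_inj:
  assumes c: "cmod c < 1" and a: "a \<in> defect_space A c" and b: "b \<in> defect_space A c"
    and eq: "G1 a = G1 b"
  shows "a = b"
proof -
  have ab: "a \<in> sperp A" "b \<in> sperp A"
    using a b by (simp_all add: defect_space_iff)
  have "(1 - (cmod c)^2) * (l2norm (fst (psub a b)))^2 \<le> 0"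
    using defect_space_norm_le[OF defect_space_psub[OF a b]] G1_psub[OF ab] eq by simp
  moreover have "0 < 1 - (cmod c)^2"
    using c by (simp add: power_less_one_iff)
  ultimately have "l2norm (fst (psub a b)) = 0"
    by (simp add: mult_le_0_iff)
  then have "fst a = fst b"
    using sperp_fst_l2[OF sperp_psub[OF ab]] by (simp add: l2norm_eq_zero_iff psub_def)
  moreover from this have "snd a = snd b"
    using a b by (simp add: defect_space_iff)
  ultimately show ?thesis
    by (simp add: prod_eq_iff)
qed

lemma defect_space_lipschitz:
  assumes a: "a \<in> defect_space A c" and a': "a' \<in> defect_space A c'" and eq: "G1 a = G1 a'"
  shows "(1 - cmod c) * l2norm (vsub (fst a) (fst a')) \<le> cmod (c - c') * l2norm (fst a')"
proof -
  have S: "a \<in> sperp A" "a' \<in> sperp A" and snd: "snd a = vsc c (fst a)" "snd a' = vsc c' (fst a')"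
    using a a' by (simp_all add: defect_space_iff)
  have l: "fst a \<in> l2" "fst a' \<in> l2"
    using S by (simp_all add: sperp_fst_l2)
  have snd_diff: "snd (psub a a') = vadd (vsc c (vsub (fst a) (fst a'))) (vsc (c - c') (fst a'))"
    by (simp add: snd fun_eq_iff algebra_simps)
  have "l2norm (vsub (fst a) (fst a')) \<le> l2norm (snd (psub a a'))"
    using G1_vzero_norm_le[OF sperp_psub[OF S]] G1_psub[OF S] eq by simp
  also have "\<dots> \<le> cmod c * l2norm (vsub (fst a) (fst a')) + cmod (c - c') * l2norm (fst a')"
    unfolding snd_diff using l l2norm_triangle[of "vsc c (vsub (fst a) (fst a'))" "vsc (c - c') (fst a')"]
    by (simp add: l2norm_vsc)
  finally show ?thesis
    by (simp add: algebra_simps)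
qed

lemma defect_space_fst_norm_le:
  assumes c: "cmod c < 1" and a: "a \<in> defect_space A c"
  shows "sqrt (1 - (cmod c)^2) * l2norm (fst a) \<le> l2norm (G1 a)"
proof (rule power2_le_imp_le)
  have "0 < 1 - (cmod c)^2"
    using c by (simp add: power_less_one_iff)
  then show "(sqrt (1 - (cmod c)^2) * l2norm (fst a))^2 \<le> (l2norm (G1 a))^2"
    using defect_space_norm_le[OF a] by (simp add: power_mult_distrib)
  show "0 \<le> l2norm (G1 a)"
    using a by (simp add: defect_space_iff G1_l2)
qed

definition combination_range :: "complex \<Rightarrow> vec set" where
  "combination_range d = {vsub (fst e) (vsc d (snd e)) | e. e \<in> A}"

lemma combination_range_l2:
  assumes "x \<in> combination_range d"
  shows "x \<in> l2"
proof -
  obtain e where "e \<in> A" "x = vsub (fst e) (vsc d (snd e))"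
    using assms unfolding combination_range_def by blast
  then show ?thesis
    by (simp add: mem_A_iff sperp_fst_l2 sperp_snd_l2)
qed

lemma combination_range_subspace: "l2_subspace (combination_range d)"
  unfolding l2_subspace_def
proof (intro conjI ballI allI subsetI)
  show "x \<in> l2" if "x \<in> combination_range d" for x
    using that by (rule combination_range_l2)
  show "vzero \<in> combination_range d"
    unfolding combination_range_def using A_vzero
    by (intro CollectI exI[of _ "(vzero, vzero)"]) (simp add: fun_eq_iff)
  show "vadd x y \<in> combination_range d" if xy: "x \<in> combination_range d" "y \<in> combination_range d" for x y
  proof -
    obtain e1 e2 where e: "e1 \<in> A" "e2 \<in> A" and x: "x = vsub (fst e1) (vsc d (snd e1))"
      and y: "y = vsub (fst e2) (vsc d (snd e2))"
      using xy unfolding combination_range_def by blast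
    have "vadd x y = vsub (fst (padd e1 e2)) (vsc d (snd (padd e1 e2)))"
      unfolding x y by (simp add: padd_def fun_eq_iff algebra_simps)
    then show ?thesis
      unfolding combination_range_def using A_padd[OF e] by blast
  qed
  show "vsc k x \<in> combination_range d" if x: "x \<in> combination_range d" for k x
  proof -
    obtain e where e: "e \<in> A" and x: "x = vsub (fst e) (vsc d (snd e))"
      using x unfolding combination_range_def by blast
    have "vsc k x = vsub (fst (psc k e)) (vsc d (snd (psc k e)))"
      unfolding x by (simp add: psc_def fun_eq_iff algebra_simps)
    then show ?thesis
      unfolding combination_range_def using A_psc[OF e] by blast
  qed
qed

lemma graph_sperp_if_orthogonal:
  assumes v: "v \<in> l2" and orth: "\<forall>m\<in>combination_range (cnj c). ip v m = 0"
  shows "(v, vsc c v) \<in> sperp A"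
  unfolding sperp_iff
proof (intro conjI ballI)
  show "l2_pair (v, vsc c v)"
    using v by (simp add: l2_pair_def)
  fix e
  assume e: "e \<in> A"
  then have "vsub (fst e) (vsc (cnj c) (snd e)) \<in> combination_range (cnj c)"
    unfolding combination_range_def by blast
  then show "sform (v, vsc c v) e = 0"
    using orth sform_graph_left[OF v] e by (simp add: mem_A_iff sperp_l2_pair)
qed

text \<open>On \<open>A\<close> the two components have equal norms, so \<open>e \<mapsto> e\<^sub>1 - d e\<^sub>2\<close> is bounded
  below on \<open>A\<close> for \<open>|d| < 1\<close>; as \<open>A\<close> is closed, so is its range.\<close>

lemma combination_range_closed:
  assumes d: "cmod d < 1" and Y: "\<And>k. Y k \<in> combination_range d" and h: "h \<in> l2"
    and lim: "l2_tendsto Y h"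
  shows "h \<in> combination_range d"
proof -
  have "\<forall>k. \<exists>e. e \<in> A \<and> Y k = vsub (fst e) (vsc d (snd e))"
    using Y unfolding combination_range_def by blast
  then obtain E where "\<forall>k. E k \<in> A \<and> Y k = vsub (fst (E k)) (vsc d (snd (E k)))"
    by (rule choice[THEN exE])
  then have E: "\<And>k. E k \<in> A" and YE: "\<And>k. Y k = vsub (fst (E k)) (vsc d (snd (E k)))"
    by simp_all
  have El: "fst (E k) \<in> l2" "snd (E k) \<in> l2" for k
    using E by (simp_all add: mem_A_iff sperp_fst_l2 sperp_snd_l2)
  have Yl: "Y k \<in> l2" for k
    using Y by (rule combination_range_l2)
  have C: "1 / (1 - cmod d) > 0"
    using d by simp
  have bound: "l2norm (vsub (fst (E m)) (fst (E n))) \<le> 1 / (1 - cmod d) * l2norm (vsub (Y m) (Y n))"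
    "l2norm (vsub (snd (E m)) (snd (E n))) \<le> 1 / (1 - cmod d) * l2norm (vsub (Y m) (Y n))" for m n
  proof -
    define x y where "x = vsub (fst (E m)) (fst (E n))" and "y = vsub (snd (E m)) (snd (E n))"
    have xy: "x \<in> l2" "y \<in> l2" and nxy: "l2norm x = l2norm y"
      using El A_norm_eq[OF A_psub[OF E E, of m n]] by (simp_all add: x_def y_def)
    have "x = vadd (vsub (Y m) (Y n)) (vsc d y)"
      by (simp add: YE x_def y_def fun_eq_iff algebra_simps)
    then have "l2norm x \<le> l2norm (vsub (Y m) (Y n)) + cmod d * l2norm y"
      using xy Yl l2norm_triangle[of "vsub (Y m) (Y n)" "vsc d y"] by (simp add: l2norm_vsc)
    then show "l2norm x \<le> 1 / (1 - cmod d) * l2norm (vsub (Y m) (Y n))"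
      "l2norm y \<le> 1 / (1 - cmod d) * l2norm (vsub (Y m) (Y n))"
      using d nxy by (simp_all add: field_simps)
  qed
  obtain x where x: "x \<in> l2" "l2_tendsto (\<lambda>k. fst (E k)) x"
    using l2_convergent_if_increments_dominated[OF Yl h lim El(1) C bound(1)] by blast
  obtain y where y: "y \<in> l2" "l2_tendsto (\<lambda>k. snd (E k)) y"
    using l2_convergent_if_increments_dominated[OF Yl h lim El(2) C bound(2)] by blast
  have "l2_tendsto Y (vsub x (vsc d y))"
    unfolding YE using El x y by (intro l2_tendsto_vsub l2_tendsto_vsc) auto
  then have "h = vsub x (vsc d y)"
    using l2_tendsto_unique[OF Yl h _ lim] x y by simp
  moreover have "(x, y) \<in> A"
    using A_closed[OF E x(1) y(1) x(2) y(2)] .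
  ultimately show ?thesis
    unfolding combination_range_def by force
qed

lemma G1_vzero_if_dual_graph:
  assumes d: "cmod d \<le> 1" and b: "b \<in> sperp A" "G2 b = vzero" "fst b = vsc d (snd b)"
  shows "G1 b = vzero"
proof -
  have "(l2norm (G1 b))^2 = ((cmod d)^2 - 1) * (l2norm (snd b))^2"
    using sperp_norm_identity[OF b(1)] b sperp_snd_l2[OF b(1)]
    by (simp add: l2norm_vsc power_mult_distrib algebra_simps)
  also have "\<dots> \<le> 0"
    using d by (simp add: mult_nonpos_nonneg power_le_one)
  finally show ?thesis
    using G1_l2[OF b(1)] by (simp add: l2norm_eq_zero_iff)
qed

text \<open>If \<open>w = \<Gamma>\<^sub>1 b\<close> with \<open>\<Gamma>\<^sub>2 b = 0\<close> is orthogonal to \<open>\<Gamma>\<^sub>1(N\<^sub>c)\<close>, then \<open>h = b\<^sub>1 - c\<^sup>* b\<^sub>2\<close>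
  is orthogonal to every \<open>v\<close> with \<open>(v, c v) \<in> A\<^sup>\<perp>\<^sup>s\<close>, i.e. to the orthogonal complement of the
  closed range \<open>{e\<^sub>1 - c\<^sup>* e\<^sub>2 | e \<in> A}\<close>, so \<open>h\<close> lies in that range. Subtracting the
  corresponding element of \<open>A\<close> from \<open>b\<close> achieves \<open>b\<^sub>1 = c\<^sup>* b\<^sub>2\<close> without changing
  \<open>\<Gamma> b\<close>, and Green's identity then forces \<open>w = 0\<close>.\<close>

lemma defect_space_G1_orthogonal_eq_vzero:
  assumes c: "cmod c < 1" and w: "w \<in> H1" and orth: "\<forall>a\<in>defect_space A c. ip w (G1 a) = 0"
  shows "w = vzero"
proof -
  have wl: "w \<in> l2"
    using w closed_H1 closed_subspace_l2 by blast
  obtain b where b: "b \<in> sperp A" "G1 b = w" "G2 b = vzero"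
    using G_surj w closed_subspace_vzero[OF closed_H2] by blast
  define h where "h = vsub (fst b) (vsc (cnj c) (snd b))"
  have hl: "h \<in> l2"
    using b(1) by (simp add: h_def sperp_fst_l2 sperp_snd_l2)
  have "ip v h = 0" if v: "v \<in> l2" "\<forall>m\<in>combination_range (cnj c). ip v m = 0" for v
  proof -
    have S: "(v, vsc c v) \<in> sperp A"
      using graph_sperp_if_orthogonal[OF v] .
    have "ip w (G1 (v, vsc c v)) = 0"
      using orth S by (simp add: defect_space_iff)
    moreover have "ip (G1 (v, vsc c v)) w = cnj (ip w (G1 (v, vsc c v)))"
      using ip_conj_swap wl G1_l2[OF S] by blast
    ultimately have "sform (v, vsc c v) b = 0"
      using green_sperp[OF S b(1)] b(2,3) by simp
    then show ?thesis
      using sform_graph_left[OF v(1) sperp_l2_pair[OF b(1)]] by (simp add: h_def)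
  qed
  then obtain Y where Y: "\<And>k. Y k \<in> combination_range (cnj c)" and lim: "l2_tendsto Y h"
    using approximable_if_orthogonal_to_complement[OF closed_subspace_UNIV combination_range_subspace _ hl]
      combination_range_l2 by blast
  have "h \<in> combination_range (cnj c)"
    using combination_range_closed[of "cnj c", OF _ Y hl lim] c by simp
  then obtain e where e: "e \<in> A" and he: "h = vsub (fst e) (vsc (cnj c) (snd e))"
    unfolding combination_range_def by blast
  have "e \<in> sperp A" "G1 e = vzero" "G2 e = vzero"
    using e by (simp_all add: mem_A_iff)
  then have "psub b e \<in> sperp A" "G1 (psub b e) = w" "G2 (psub b e) = vzero"
    using b by (simp_all add: sperp_psub G1_psub G2_psub fun_eq_iff)
  moreover have "fst (psub b e) = vsc (cnj c) (snd (psub b e))"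
    using he by (simp add: h_def fun_eq_iff algebra_simps)
  ultimately show ?thesis
    using G1_vzero_if_dual_graph[of "cnj c" "psub b e"] c by simp
qed

lemma defect_space_G1_range_subspace: "l2_subspace (G1 ` defect_space A c)"
  unfolding l2_subspace_def
proof (intro conjI ballI allI subsetI)
  have N_S: "a \<in> defect_space A c \<Longrightarrow> a \<in> sperp A" for a
    by (simp add: defect_space_iff)
  show "x \<in> l2" if "x \<in> G1 ` defect_space A c" for x
    using that N_S G1_l2 by auto
  show "vzero \<in> G1 ` defect_space A c"
    using defect_space_vzero G_vzero(1) by (intro image_eqI[of _ _ "(vzero, vzero)"]) auto
  show "vadd x y \<in> G1 ` defect_space A c" if xy: "x \<in> G1 ` defect_space A c" "y \<in> G1 ` defect_space A c" for x y
  proof -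
    obtain a1 a2 where "a1 \<in> defect_space A c" "a2 \<in> defect_space A c" "x = G1 a1" "y = G1 a2"
      using xy by blast
    then show ?thesis
      using defect_space_padd G1_padd N_S by (intro image_eqI[of _ _ "padd a1 a2"]) auto
  qed
  show "vsc k x \<in> G1 ` defect_space A c" if x: "x \<in> G1 ` defect_space A c" for k x
  proof -
    obtain a1 where "a1 \<in> defect_space A c" "x = G1 a1"
      using x by blast
    then show ?thesis
      using defect_space_psc G1_psc N_S by (intro image_eqI[of _ _ "psc k a1"]) auto
  qed
qed

lemma defect_space_G1_range_closed:
  assumes c: "cmod c < 1" and X: "\<And>k. X k \<in> G1 ` defect_space A c" and z: "z \<in> l2"
    and lim: "l2_tendsto X z"
  shows "z \<in> G1 ` defect_space A c"
proof -
  have "\<forall>k. \<exists>a. a \<in> defect_space A c \<and> G1 a = X k"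
  proof
    fix k
    obtain a where "a \<in> defect_space A c" "X k = G1 a"
      using X[of k] by (rule imageE)
    then show "\<exists>a. a \<in> defect_space A c \<and> G1 a = X k"
      by (intro exI[of _ a]) simp
  qed
  then obtain a where "\<forall>k. a k \<in> defect_space A c \<and> G1 (a k) = X k"
    by (rule choice[THEN exE])
  then have a: "\<And>k. a k \<in> defect_space A c" and aX: "\<And>k. G1 (a k) = X k"
    by simp_all
  have aS: "a k \<in> sperp A" for k
    using a by (simp add: defect_space_iff)
  have Xl: "X k \<in> l2" for k
    using G1_l2[OF aS[of k]] by (simp add: aX)
  define \<delta> where "\<delta> = sqrt (1 - (cmod c)^2)"
  have \<delta>: "\<delta> > 0" "1 / \<delta> > 0"
    using c by (simp_all add: \<delta>_def power_less_one_iff)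
  have "\<delta> * l2norm (vsub (fst (a m)) (fst (a n))) \<le> l2norm (vsub (X m) (X n))" for m n
    using defect_space_fst_norm_le[OF c defect_space_psub[OF a a, of m n]]
    unfolding \<delta>_def G1_psub[OF aS aS] aX by simp
  then have bound: "l2norm (vsub (fst (a m)) (fst (a n))) \<le> 1 / \<delta> * l2norm (vsub (X m) (X n))" for m n
    using \<delta> by (simp add: field_simps)
  have al: "fst (a k) \<in> l2" for k
    using aS by (rule sperp_fst_l2)
  obtain f where f: "f \<in> l2" "l2_tendsto (\<lambda>k. fst (a k)) f"
    using l2_convergent_if_increments_dominated[OF Xl z lim al \<delta>(2) bound] by blast
  have snd_a: "snd (a k) = vsc c (fst (a k))" for k
    using a by (simp add: defect_space_iff)
  have g: "l2_tendsto (\<lambda>k. snd (a k)) (vsc c f)"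
    unfolding snd_a using al f by (intro l2_tendsto_vsc)
  have fS: "(f, vsc c f) \<in> sperp A"
    using sperp_closed[OF aS f(1) _ f(2) g] f(1) by simp
  have "l2_tendsto X (G1 (f, vsc c f))"
    using G_tendsto(1)[OF aS fS] f g by (simp add: aX)
  then have "z = G1 (f, vsc c f)"
    using l2_tendsto_unique[OF Xl z G1_l2[OF fS] lim] by simp
  moreover have "(f, vsc c f) \<in> defect_space A c"
    using fS by (simp add: defect_space_iff)
  ultimately show ?thesis
    by blast
qed

lemma defect_space_G1_surj:
  assumes c: "cmod c < 1" and z: "z \<in> H1"
  shows "\<exists>a\<in>defect_space A c. G1 a = z"
proof -
  have R_H1: "G1 ` defect_space A c \<subseteq> H1"
    using G1_mem by (auto simp: defect_space_iff)
  have "ip v z = 0" if "v \<in> H1" "\<forall>r\<in>G1 ` defect_space A c. ip v r = 0" for v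
    using defect_space_G1_orthogonal_eq_vzero[OF c that(1)] that(2) by simp
  then obtain X where "\<And>k. X k \<in> G1 ` defect_space A c" "l2_tendsto X z"
    using approximable_if_orthogonal_to_complement[OF closed_H1 defect_space_G1_range_subspace R_H1 z] by blast
  then have "z \<in> G1 ` defect_space A c"
    using defect_space_G1_range_closed[OF c] z closed_H1 closed_subspace_l2 by blast
  then show ?thesis
    by blast
qed

lemma defect_space_G1_ex1:
  "cmod c < 1 \<Longrightarrow> z \<in> H1 \<Longrightarrow> \<exists>!a. a \<in> defect_space A c \<and> G1 a = z"
  using defect_space_G1_surj defect_space_G1_inj by blast

definition gamma :: "complex \<Rightarrow> vec \<Rightarrow> vec \<times> vec" where
  "gamma c z = (THE a. a \<in> defect_space A c \<and> G1 a = z)"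

definition varphi :: "complex \<Rightarrow> vec \<Rightarrow> vec" where
  "varphi c z = fst (gamma c z)"

lemma gamma_mem: "cmod c < 1 \<Longrightarrow> z \<in> H1 \<Longrightarrow> gamma c z \<in> defect_space A c"
  and G1_gamma: "cmod c < 1 \<Longrightarrow> z \<in> H1 \<Longrightarrow> G1 (gamma c z) = z"
  using theI'[OF defect_space_G1_ex1] unfolding gamma_def by blast+

lemma gamma_eqI: "cmod c < 1 \<Longrightarrow> a \<in> defect_space A c \<Longrightarrow> G1 a \<in> H1 \<Longrightarrow> gamma c (G1 a) = a"
  using defect_space_G1_inj gamma_mem G1_gamma by blast

lemma gamma_eq: "cmod c < 1 \<Longrightarrow> z \<in> H1 \<Longrightarrow> gamma c z = (varphi c z, vsc c (varphi c z))"
  using gamma_mem by (simp add: varphi_def defect_space_iff prod_eq_iff)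

lemma gamma_sperp: "cmod c < 1 \<Longrightarrow> z \<in> H1 \<Longrightarrow> gamma c z \<in> sperp A"
  using gamma_mem by (simp add: defect_space_iff)

lemma varphi_l2: "cmod c < 1 \<Longrightarrow> z \<in> H1 \<Longrightarrow> varphi c z \<in> l2"
  using gamma_sperp sperp_fst_l2 by (simp add: varphi_def)

lemma varphi_vadd:
  assumes "cmod c < 1" "z1 \<in> H1" "z2 \<in> H1"
  shows "varphi c (vadd z1 z2) = vadd (varphi c z1) (varphi c z2)"
proof -
  have "gamma c (G1 (padd (gamma c z1) (gamma c z2))) = padd (gamma c z1) (gamma c z2)"
    using assms by (intro gamma_eqI defect_space_padd gamma_mem G1_mem sperp_padd gamma_sperp)
  moreover have "G1 (padd (gamma c z1) (gamma c z2)) = vadd z1 z2"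
    using assms by (simp add: G1_padd gamma_sperp G1_gamma)
  ultimately have "gamma c (vadd z1 z2) = padd (gamma c z1) (gamma c z2)"
    by simp
  then show ?thesis
    by (simp add: varphi_def padd_def)
qed

lemma varphi_vsc:
  assumes "cmod c < 1" "z \<in> H1"
  shows "varphi c (vsc k z) = vsc k (varphi c z)"
proof -
  have "gamma c (G1 (psc k (gamma c z))) = psc k (gamma c z)"
    using assms by (intro gamma_eqI defect_space_psc gamma_mem G1_mem sperp_psc gamma_sperp)
  moreover have "G1 (psc k (gamma c z)) = vsc k z"
    using assms by (simp add: G1_psc gamma_sperp G1_gamma)
  ultimately have "gamma c (vsc k z) = psc k (gamma c z)"
    by simp
  then show ?thesis
    by (simp add: varphi_def psc_def)
qed

lemma varphi_norm_le:
  "cmod c < 1 \<Longrightarrow> z \<in> H1 \<Longrightarrow> (1 - (cmod c)^2) * (l2norm (varphi c z))^2 \<le> (l2norm z)^2"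
  using defect_space_norm_le[OF gamma_mem] by (simp add: G1_gamma varphi_def)

lemma varphi_lipschitz:
  "cmod c < 1 \<Longrightarrow> cmod c' < 1 \<Longrightarrow> z \<in> H1 \<Longrightarrow>
    (1 - cmod c) * l2norm (vsub (varphi c z) (varphi c' z)) \<le> cmod (c - c') * l2norm (varphi c' z)"
  using defect_space_lipschitz[OF gamma_mem gamma_mem] by (simp add: G1_gamma varphi_def)

lemma varphi_bounded_disc_family: "bounded_disc_family H1 varphi"
  using varphi_l2 varphi_norm_le varphi_lipschitz by (simp add: bounded_disc_family_def)

lemma varphi_representable:
  assumes c: "cmod c < 1" and x: "x \<in> l2"
  shows "\<exists>w\<in>H1. \<forall>z\<in>H1. ip w z = ip x (varphi c z)"
proof (rule riesz_representation[OF closed_H1])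
  show "ip x (varphi c (vadd u v)) = ip x (varphi c u) + ip x (varphi c v)" if "u \<in> H1" "v \<in> H1" for u v
    using c x that by (simp add: varphi_vadd varphi_l2 ip_vadd_right)
  show "ip x (varphi c (vsc k v)) = cnj k * ip x (varphi c v)" if "v \<in> H1" for k v
    using c x that by (simp add: varphi_vsc varphi_l2 ip_vsc_right)
  show "cmod (ip x (varphi c v)) \<le> l2norm x / sqrt (1 - (cmod c)^2) * l2norm v" if v: "v \<in> H1" for v
  proof -
    have pos: "0 < sqrt (1 - (cmod c)^2)"
      using c by (simp add: power_less_one_iff)
    have "sqrt (1 - (cmod c)^2) * l2norm (varphi c v) \<le> l2norm v"
      using defect_space_fst_norm_le[OF c gamma_mem[OF c v]] by (simp add: G1_gamma[OF c v] varphi_def)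
    then have "l2norm (varphi c v) \<le> l2norm v / sqrt (1 - (cmod c)^2)"
      using pos by (simp add: field_simps)
    then have "l2norm x * l2norm (varphi c v) \<le> l2norm x * (l2norm v / sqrt (1 - (cmod c)^2))"
      using x by (intro mult_left_mono) simp_all
    then show ?thesis
      using ip_cauchy_schwarz[OF x varphi_l2[OF c v]] by simp
  qed
qed

end

section \<open>The Weyl function and the localized kernel\<close>

lemma Kloc_eqI:
  assumes "closed_subspace (tgt Hp Hm p)" "w \<in> tgt Hp Hm p"
    and "\<And>v. v \<in> tgt Hp Hm p \<Longrightarrow> ip w v = ip (phi T Gp Gm (ptbar q) y) (phi T Gp Gm (ptbar p) v)"
  shows "Kloc T Hp Hm Gp Gm p q y = w"
  unfolding Kloc_def fsec_def phidag_def hat_def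
proof (rule the_equality)
  fix w'
  assume w': "w' \<in> tgt Hp Hm p \<and> (\<forall>v\<in>tgt Hp Hm p. ip w' v = ip (phi T Gp Gm (ptbar q) y) (phi T Gp Gm (ptbar p) v))"
  then show "w' = w"
    using closed_subspace_ip_eqI[OF assms(1) _ assms(2)] assms(3) by simp
qed (use assms in blast)

lemma tgt_Pl [simp]: "tgt Hp Hm (Pl, l) = Hm"
  and tgt_Mi [simp]: "tgt Hp Hm (Mi, l) = Hp"
  and ptbar_Pl [simp]: "ptbar (Pl, l) = (Mi, cnj l)"
  and ptbar_Mi [simp]: "ptbar (Mi, l) = (Pl, cnj l)"
  by (simp_all add: tgt_def ptbar_def)

lemma one_minus_mult_cnj_neq_zero:
  assumes "cmod l < 1" "cmod m < 1"
  shows "1 - l * cnj m \<noteq> 0"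
proof -
  have "cmod (l * cnj m) \<le> cmod m"
    using assms by (simp add: norm_mult mult_left_le_one_le)
  then have "cmod (l * cnj m) \<noteq> 1"
    using assms by simp
  then show ?thesis
    by auto
qed

locale weyl_setting =
  fixes T :: "vec \<Rightarrow> vec" and Hp Hm :: "vec set" and Gp Gm :: "vec \<times> vec \<Rightarrow> vec"
    and B :: "complex \<Rightarrow> vec \<Rightarrow> vec"
  assumes quadruple: "boundary_quadruple T Hp Hm Gp Gm"
    and weyl: "weyl_function T Hp Hm Gp Gm B"
begin

sublocale P: abstract_boundary_quadruple "A_T T" Hp Hm Gp Gm
  using quadruple by (rule boundary_quadruple_abstract)

text \<open>The same axioms with the components swapped describe \<open>\<Gamma>\<^sub>-\<close> on \<open>\<bbbD>\<^sub>-\<close>.\<close>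

sublocale M: abstract_boundary_quadruple "prod.swap ` A_T T" Hm Hp "Gm \<circ> prod.swap" "Gp \<circ> prod.swap"
  using quadruple by (intro abstract_boundary_quadruple_swap boundary_quadruple_abstract)

lemma Nsp_Pl: "Nsp T (Pl, c) = defect_space (A_T T) c"
  by (simp add: Nsp_def defect_space_def)

lemma Nsp_Mi: "Nsp T (Mi, c) = prod.swap ` defect_space (prod.swap ` A_T T) c"
proof -
  have "a \<in> Nsp T (Mi, c) \<longleftrightarrow> a \<in> sperp (A_T T) \<and> fst a = vsc c (snd a)" for a
    by (cases a) (auto simp: Nsp_def sperp_iff l2_pair_def)
  then show ?thesis
    by (auto simp: mem_swap_image defect_space_iff sperp_swap)
qed

lemma gam_Pl: "gam T Gp Gm (Pl, c) y = P.gamma c y"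
  by (simp add: gam_def P.gamma_def Nsp_Pl)

lemma gam_Mi:
  assumes "cmod c < 1" "y \<in> Hm"
  shows "gam T Gp Gm (Mi, c) y = prod.swap (M.gamma c y)"
  unfolding gam_def
proof (rule the_equality)
  show "prod.swap (M.gamma c y) \<in> Nsp T (Mi, c) \<and>
      (case fst (Mi, c) of Pl \<Rightarrow> Gp (prod.swap (M.gamma c y)) | Mi \<Rightarrow> Gm (prod.swap (M.gamma c y))) = y"
    using M.gamma_mem[OF assms] M.G1_gamma[OF assms] by (simp add: Nsp_Mi mem_swap_image)
  fix a
  assume "a \<in> Nsp T (Mi, c) \<and> (case fst (Mi, c) of Pl \<Rightarrow> Gp a | Mi \<Rightarrow> Gm a) = y"
  then have a: "prod.swap a \<in> defect_space (prod.swap ` A_T T) c" and G: "(Gm \<circ> prod.swap) (prod.swap a) = y"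
    by (simp_all add: Nsp_Mi mem_swap_image)
  then have "M.gamma c ((Gm \<circ> prod.swap) (prod.swap a)) = prod.swap a"
    using M.gamma_eqI[OF assms(1) a] M.G1_mem defect_space_iff by blast
  then show "a = prod.swap (M.gamma c y)"
    using G by simp
qed

lemma phi_Pl: "phi T Gp Gm (Pl, c) y = P.varphi c y"
  by (simp add: phi_def gam_Pl P.varphi_def)

lemma phi_Mi: "cmod c < 1 \<Longrightarrow> y \<in> Hm \<Longrightarrow> phi T Gp Gm (Mi, c) y = M.varphi c y"
  by (simp add: phi_def gam_Mi M.varphi_def)

lemma B_mem: "cmod c < 1 \<Longrightarrow> x \<in> Hp \<Longrightarrow> B c x \<in> Hm"
  using weyl by (auto simp: weyl_function_def bounded_op_def)

lemma gam_Pl_eq: "cmod c < 1 \<Longrightarrow> y \<in> Hp \<Longrightarrow> gam T Gp Gm (Pl, c) y = (P.varphi c y, vsc c (P.varphi c y))"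
  by (simp add: gam_Pl P.gamma_eq)

lemma gam_Pl_sperp: "cmod c < 1 \<Longrightarrow> y \<in> Hp \<Longrightarrow> gam T Gp Gm (Pl, c) y \<in> sperp (A_T T)"
  and Gp_gam_Pl: "cmod c < 1 \<Longrightarrow> y \<in> Hp \<Longrightarrow> Gp (gam T Gp Gm (Pl, c) y) = y"
  by (simp_all add: gam_Pl P.gamma_sperp P.G1_gamma)

lemma Gm_gam_Pl: "cmod c < 1 \<Longrightarrow> y \<in> Hp \<Longrightarrow> Gm (gam T Gp Gm (Pl, c) y) = B c y"
  using weyl P.gamma_mem Gp_gam_Pl by (simp add: weyl_function_def gam_Pl Nsp_Pl)

lemma gam_Mi_eq: "cmod c < 1 \<Longrightarrow> y \<in> Hm \<Longrightarrow> gam T Gp Gm (Mi, c) y = (vsc c (M.varphi c y), M.varphi c y)"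
  by (simp add: gam_Mi M.gamma_eq)

lemma gam_Mi_sperp: "cmod c < 1 \<Longrightarrow> y \<in> Hm \<Longrightarrow> gam T Gp Gm (Mi, c) y \<in> sperp (A_T T)"
  and Gm_gam_Mi: "cmod c < 1 \<Longrightarrow> y \<in> Hm \<Longrightarrow> Gm (gam T Gp Gm (Mi, c) y) = y"
  using M.gamma_sperp M.G1_gamma by (simp_all add: gam_Mi sperp_swap mem_swap_image)

lemma green_cancel:
  "a \<in> sperp (A_T T) \<Longrightarrow> b \<in> sperp (A_T T) \<Longrightarrow> sform a b = \<i> * z \<Longrightarrow>
    z = ip (Gp a) (Gp b) - ip (Gm a) (Gm b)"
  using P.green_sperp by (simp add: right_diff_distrib[symmetric])

text \<open>Green's identity between \<open>N\<^sub>m\<close> and the defect space at \<open>m\<^sup>*\<close> on \<open>\<bbbD>\<^sub>-\<close> exhibits the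
  adjoint of the Weyl function: \<open>\<Gamma>\<^sub>+ a = B(m)\<^sup>* \<Gamma>\<^sub>- a\<close> on the latter.\<close>

lemma Gp_gam_Mi_adjoint:
  assumes m: "cmod m < 1" and y: "y \<in> Hm" and x: "x \<in> Hp"
  shows "ip (B m x) y = ip x (Gp (gam T Gp Gm (Mi, cnj m) y))"
proof -
  have cm: "cmod (cnj m) < 1"
    using m by simp
  have "sform (gam T Gp Gm (Pl, m) x) (gam T Gp Gm (Mi, cnj m) y) = \<i> * 0"
    using sform_graphs(3) P.varphi_l2[OF m x] M.varphi_l2[OF cm y]
    by (simp add: gam_Pl_eq[OF m x] gam_Mi_eq[OF cm y])
  from green_cancel[OF gam_Pl_sperp[OF m x] gam_Mi_sperp[OF cm y] this] show ?thesis
    by (simp add: Gp_gam_Pl[OF m x] Gm_gam_Pl[OF m x] Gm_gam_Mi[OF cm y])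
qed

lemma opadj_B_eq:
  assumes m: "cmod m < 1" and y: "y \<in> Hm"
  shows "opadj Hp (B m) y = Gp (gam T Gp Gm (Mi, cnj m) y)"
  unfolding opadj_def
proof (rule the_equality)
  have mem: "Gp (gam T Gp Gm (Mi, cnj m) y) \<in> Hp"
    using P.G1_mem gam_Mi_sperp m y by simp
  then show "Gp (gam T Gp Gm (Mi, cnj m) y) \<in> Hp \<and>
      (\<forall>x'\<in>Hp. ip (B m x') y = ip x' (Gp (gam T Gp Gm (Mi, cnj m) y)))"
    using Gp_gam_Mi_adjoint[OF m y] by blast
  fix x
  assume x: "x \<in> Hp \<and> (\<forall>x'\<in>Hp. ip (B m x') y = ip x' x)"
  have "ip x v = ip (Gp (gam T Gp Gm (Mi, cnj m) y)) v" if v: "v \<in> Hp" for v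
  proof -
    have "ip v x = ip v (Gp (gam T Gp Gm (Mi, cnj m) y))"
      using x Gp_gam_Mi_adjoint[OF m y v] v by simp
    then show ?thesis
      using x mem v P.closed_H1 closed_subspace_l2 ip_conj_swap by (metis complex_cnj_cnj)
  qed
  then show "x = Gp (gam T Gp Gm (Mi, cnj m) y)"
    using closed_subspace_ip_eqI[OF P.closed_H1 _ mem] x by blast
qed

lemma Gp_gam_Mi: "cmod c < 1 \<Longrightarrow> y \<in> Hm \<Longrightarrow> Gp (gam T Gp Gm (Mi, c) y) = opadj Hp (B (cnj c)) y"
  using opadj_B_eq[of "cnj c" y] by simp

lemma opadj_B_mem: "cmod m < 1 \<Longrightarrow> y \<in> Hm \<Longrightarrow> opadj Hp (B m) y \<in> Hp"
  and opadj_B: "cmod m < 1 \<Longrightarrow> y \<in> Hm \<Longrightarrow> x \<in> Hp \<Longrightarrow> ip (B m x) y = ip x (opadj Hp (B m) y)"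
  using opadj_B_eq Gp_gam_Mi_adjoint P.G1_mem gam_Mi_sperp by simp_all

lemma closed_tgt: "closed_subspace (tgt Hp Hm p)"
  using P.closed_H1 P.closed_H2 by (simp add: tgt_def split: sheet.split)

lemma Kloc_Pl_Pl:
  assumes l: "cmod l < 1" and m: "cmod m < 1" and y: "y \<in> Hm"
  shows "Kloc T Hp Hm Gp Gm (Pl, l) (Pl, m) y = vsc (1 / (1 - l * cnj m)) (vsub y (B l (opadj Hp (B m) y)))"
proof (rule Kloc_eqI[OF closed_tgt], goal_cases)
  have cl: "cmod (cnj l) < 1" and cm: "cmod (cnj m) < 1"
    using l m by simp_all
  define z where "z = opadj Hp (B m) y"
  have z: "z \<in> Hp" "B l z \<in> Hm"
    using opadj_B_mem[OF m y] B_mem[OF l] by (simp_all add: z_def)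
  case 1
  then show ?case
    using P.closed_H2 y z by (simp add: z_def[symmetric] closed_subspace_vsc closed_subspace_vsub)

  case (2 v)
  then have v: "v \<in> Hm"
    by simp
  define x x' where "x = M.varphi (cnj m) y" and "x' = M.varphi (cnj l) v"
  have "sform (gam T Gp Gm (Mi, cnj m) y) (gam T Gp Gm (Mi, cnj l) v) = \<i> * ((cnj m * l - 1) * ip x x')"
    using sform_graphs(2) M.varphi_l2[OF cm y] M.varphi_l2[OF cl v]
    by (simp add: gam_Mi_eq[OF cm y] gam_Mi_eq[OF cl v] x_def x'_def)
  from green_cancel[OF gam_Mi_sperp[OF cm y] gam_Mi_sperp[OF cl v] this]
  have "(cnj m * l - 1) * ip x x' = ip (B l z) v - ip y v"
    using opadj_B[OF l v z(1)] by (simp add: Gp_gam_Mi[OF cm y] Gp_gam_Mi[OF cl v] Gm_gam_Mi l m y v z_def)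
  then have "ip x x' = (ip y v - ip (B l z) v) / (1 - l * cnj m)"
    using one_minus_mult_cnj_neq_zero[OF l m] by (simp add: field_simps)
  then show ?case
    using y v z P.closed_H2 closed_subspace_l2
    by (simp add: phi_Mi[OF cm y] phi_Mi[OF cl v] x_def x'_def z_def[symmetric] ip_vsc_left ip_vsub_left)
qed

lemma Kloc_Mi_Mi:
  assumes l: "cmod l < 1" and m: "cmod m < 1" and y: "y \<in> Hp"
  shows "Kloc T Hp Hm Gp Gm (Mi, l) (Mi, m) y
    = vsc (1 / (1 - l * cnj m)) (vsub y (opadj Hp (B (cnj l)) (B (cnj m) y)))"
proof (rule Kloc_eqI[OF closed_tgt], goal_cases)
  have cl: "cmod (cnj l) < 1" and cm: "cmod (cnj m) < 1"
    using l m by simp_all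
  define z where "z = opadj Hp (B (cnj l)) (B (cnj m) y)"
  have z: "z \<in> Hp"
    using opadj_B_mem[OF cl B_mem[OF cm y]] by (simp add: z_def)
  case 1
  then show ?case
    using P.closed_H1 y z by (simp add: z_def[symmetric] closed_subspace_vsc closed_subspace_vsub)

  case (2 v)
  then have v: "v \<in> Hp"
    by simp
  define x x' where "x = P.varphi (cnj m) y" and "x' = P.varphi (cnj l) v"
  have "sform (gam T Gp Gm (Pl, cnj m) y) (gam T Gp Gm (Pl, cnj l) v) = \<i> * ((1 - cnj m * l) * ip x x')"
    using sform_graphs(1) P.varphi_l2[OF cm y] P.varphi_l2[OF cl v]
    by (simp add: gam_Pl_eq[OF cm y] gam_Pl_eq[OF cl v] x_def x'_def)
  from green_cancel[OF gam_Pl_sperp[OF cm y] gam_Pl_sperp[OF cl v] this]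
  have "(1 - cnj m * l) * ip x x' = ip y v - ip (B (cnj m) y) (B (cnj l) v)"
    by (simp add: Gp_gam_Pl Gm_gam_Pl l m y v)
  moreover have "ip (B (cnj m) y) (B (cnj l) v) = ip z v"
    using opadj_B[OF cl B_mem[OF cm y] v] ip_conj_swap B_mem cm cl y v z P.closed_H1 P.closed_H2
      closed_subspace_l2 unfolding z_def by (metis complex_cnj_cnj)
  ultimately have "ip x x' = (ip y v - ip z v) / (1 - l * cnj m)"
    using one_minus_mult_cnj_neq_zero[OF l m] by (simp add: field_simps)
  then show ?case
    using y v z P.closed_H1 closed_subspace_l2
    by (simp add: phi_Pl x_def x'_def z_def[symmetric] ip_vsc_left ip_vsub_left)
qed

lemma Kloc_Pl_Mi:
  assumes l: "cmod l < 1" and m: "cmod m < 1" and lm: "l \<noteq> cnj m" and y: "y \<in> Hp"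
  shows "Kloc T Hp Hm Gp Gm (Pl, l) (Mi, m) y = vsc (1 / (l - cnj m)) (vsub (B l y) (B (cnj m) y))"
proof (rule Kloc_eqI[OF closed_tgt], goal_cases)
  have cl: "cmod (cnj l) < 1" and cm: "cmod (cnj m) < 1"
    using l m by simp_all
  have B: "B l y \<in> Hm" "B (cnj m) y \<in> Hm"
    using B_mem l cm y by simp_all
  case 1
  then show ?case
    using P.closed_H2 B by (simp add: closed_subspace_vsc closed_subspace_vsub)

  case (2 v)
  then have v: "v \<in> Hm"
    by simp
  define x x' where "x = P.varphi (cnj m) y" and "x' = M.varphi (cnj l) v"
  have "sform (gam T Gp Gm (Pl, cnj m) y) (gam T Gp Gm (Mi, cnj l) v) = \<i> * ((l - cnj m) * ip x x')"
    using sform_graphs(3) P.varphi_l2[OF cm y] M.varphi_l2[OF cl v]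
    by (simp add: gam_Pl_eq[OF cm y] gam_Mi_eq[OF cl v] x_def x'_def)
  from green_cancel[OF gam_Pl_sperp[OF cm y] gam_Mi_sperp[OF cl v] this]
  have "(l - cnj m) * ip x x' = ip (B l y) v - ip (B (cnj m) y) v"
    using opadj_B[OF l v y] by (simp add: Gp_gam_Pl Gm_gam_Pl Gp_gam_Mi Gm_gam_Mi l m y v)
  then have "ip x x' = (ip (B l y) v - ip (B (cnj m) y) v) / (l - cnj m)"
    using lm by (simp add: field_simps)
  then show ?case
    using B v P.closed_H2 closed_subspace_l2
    by (simp add: phi_Pl phi_Mi[OF cl v] x_def x'_def ip_vsc_left ip_vsub_left)
qed

lemma Kloc_Mi_Pl:
  assumes l: "cmod l < 1" and m: "cmod m < 1" and lm: "l \<noteq> cnj m" and y: "y \<in> Hm"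
  shows "Kloc T Hp Hm Gp Gm (Mi, l) (Pl, m) y
    = vsc (1 / (l - cnj m)) (vsub (opadj Hp (B (cnj l)) y) (opadj Hp (B m) y))"
proof (rule Kloc_eqI[OF closed_tgt], goal_cases)
  have cl: "cmod (cnj l) < 1" and cm: "cmod (cnj m) < 1"
    using l m by simp_all
  define z1 z2 where "z1 = opadj Hp (B (cnj l)) y" and "z2 = opadj Hp (B m) y"
  have z: "z1 \<in> Hp" "z2 \<in> Hp"
    using opadj_B_mem cl m y by (simp_all add: z1_def z2_def)
  case 1
  then show ?case
    using P.closed_H1 z by (simp add: z1_def[symmetric] z2_def[symmetric] closed_subspace_vsc closed_subspace_vsub)

  case (2 v)
  then have v: "v \<in> Hp"
    by simp
  define x x' where "x = M.varphi (cnj m) y" and "x' = P.varphi (cnj l) v"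
  have "sform (gam T Gp Gm (Mi, cnj m) y) (gam T Gp Gm (Pl, cnj l) v) = \<i> * ((cnj m - l) * ip x x')"
    using sform_graphs(4) M.varphi_l2[OF cm y] P.varphi_l2[OF cl v]
    by (simp add: gam_Mi_eq[OF cm y] gam_Pl_eq[OF cl v] x_def x'_def)
  from green_cancel[OF gam_Mi_sperp[OF cm y] gam_Pl_sperp[OF cl v] this]
  have "(cnj m - l) * ip x x' = ip z2 v - ip y (B (cnj l) v)"
    by (simp add: Gp_gam_Pl Gm_gam_Pl Gp_gam_Mi Gm_gam_Mi l m y v z2_def)
  moreover have "ip y (B (cnj l) v) = ip z1 v"
    using opadj_B[OF cl y v] ip_conj_swap B_mem cl y v z P.closed_H1 P.closed_H2
      closed_subspace_l2 unfolding z1_def by (metis complex_cnj_cnj)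
  ultimately have "ip x x' = (ip z1 v - ip z2 v) / (l - cnj m)"
    using lm by (simp add: field_simps)
  then show ?case
    using z v P.closed_H1 closed_subspace_l2
    by (simp add: phi_Pl phi_Mi[OF cm y] x_def x'_def z1_def[symmetric] z2_def[symmetric] ip_vsc_left ip_vsub_left)
qed

lemma Kloc_Pl_Mi_representation:
  assumes a: "cmod a < 1" and b: "cmod b < 1" and y: "y \<in> Hp"
  shows "Kloc T Hp Hm Gp Gm (Pl, a) (Mi, b) y \<in> Hm \<and>
    (\<forall>v\<in>Hm. ip (Kloc T Hp Hm Gp Gm (Pl, a) (Mi, b) y) v = ip (P.varphi (cnj b) y) (M.varphi (cnj a) v))"
proof -
  have ca: "cmod (cnj a) < 1" and cb: "cmod (cnj b) < 1"
    using a b by simp_all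
  obtain w where w: "w \<in> Hm" "\<forall>v\<in>Hm. ip w v = ip (P.varphi (cnj b) y) (M.varphi (cnj a) v)"
    using M.varphi_representable[OF ca P.varphi_l2[OF cb y]] by blast
  have "Kloc T Hp Hm Gp Gm (Pl, a) (Mi, b) y = w"
    using w by (intro Kloc_eqI[OF closed_tgt]) (simp_all add: phi_Pl phi_Mi[OF ca])
  then show ?thesis
    using w by simp
qed

lemma Kloc_Mi_Pl_representation:
  assumes a: "cmod a < 1" and b: "cmod b < 1" and y: "y \<in> Hm"
  shows "Kloc T Hp Hm Gp Gm (Mi, a) (Pl, b) y \<in> Hp \<and>
    (\<forall>v\<in>Hp. ip (Kloc T Hp Hm Gp Gm (Mi, a) (Pl, b) y) v = ip (M.varphi (cnj b) y) (P.varphi (cnj a) v))"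
proof -
  have ca: "cmod (cnj a) < 1" and cb: "cmod (cnj b) < 1"
    using a b by simp_all
  obtain w where w: "w \<in> Hp" "\<forall>v\<in>Hp. ip w v = ip (M.varphi (cnj b) y) (P.varphi (cnj a) v)"
    using P.varphi_representable[OF ca M.varphi_l2[OF cb y]] by blast
  have "Kloc T Hp Hm Gp Gm (Mi, a) (Pl, b) y = w"
    using w by (intro Kloc_eqI[OF closed_tgt]) (simp_all add: phi_Pl phi_Mi[OF cb y])
  then show ?thesis
    using w by simp
qed

lemma Kloc_Pl_Mi_continuous:
  assumes "cmod l < 1" "cmod m < 1" "y \<in> Hp"
  shows "((\<lambda>(a, b). l2norm (vsub (Kloc T Hp Hm Gp Gm (Pl, a) (Mi, b) y) (Kloc T Hp Hm Gp Gm (Pl, l) (Mi, m) y)))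
    \<longlongrightarrow> 0) (at (l, m) within U)"
  using assms P.closed_H1 closed_subspace_l2 Kloc_Pl_Mi_representation
  by (intro kernel_continuous[OF P.closed_H2 P.varphi_bounded_disc_family _ _ M.varphi_bounded_disc_family])
    blast+

lemma Kloc_Mi_Pl_continuous:
  assumes "cmod l < 1" "cmod m < 1" "y \<in> Hm"
  shows "((\<lambda>(a, b). l2norm (vsub (Kloc T Hp Hm Gp Gm (Mi, a) (Pl, b) y) (Kloc T Hp Hm Gp Gm (Mi, l) (Pl, m) y)))
    \<longlongrightarrow> 0) (at (l, m) within U)"
  using assms P.closed_H2 closed_subspace_l2 Kloc_Mi_Pl_representation
  by (intro kernel_continuous[OF P.closed_H1 M.varphi_bounded_disc_family _ _ P.varphi_bounded_disc_family])
    blast+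

lemma Kloc_Pl_Mi_limit:
  assumes "cmod l < 1" "cmod m < 1" "y \<in> Hp"
  shows "((\<lambda>(a, b). l2norm (vsub (vsc (1 / (a - cnj b)) (vsub (B a y) (B (cnj b) y)))
      (Kloc T Hp Hm Gp Gm (Pl, l) (Mi, m) y))) \<longlongrightarrow> 0)
    (at (l, m) within {(a, b). cmod a < 1 \<and> cmod b < 1 \<and> a \<noteq> cnj b})"
  using Kloc_Pl_Mi assms(3) by (intro l2norm_tendsto_within_cong[OF _ Kloc_Pl_Mi_continuous[OF assms]]) simp

lemma Kloc_Mi_Pl_limit:
  assumes "cmod l < 1" "cmod m < 1" "y \<in> Hm"
  shows "((\<lambda>(a, b). l2norm (vsub (vsc (1 / (a - cnj b)) (vsub (opadj Hp (B (cnj a)) y) (opadj Hp (B b) y)))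
      (Kloc T Hp Hm Gp Gm (Mi, l) (Pl, m) y))) \<longlongrightarrow> 0)
    (at (l, m) within {(a, b). cmod a < 1 \<and> cmod b < 1 \<and> a \<noteq> cnj b})"
  using Kloc_Mi_Pl assms(3) by (intro l2norm_tendsto_within_cong[OF _ Kloc_Mi_Pl_continuous[OF assms]]) simp

end

theorem theorem4p13:
  fixes T :: "vec \<Rightarrow> vec" and Hp Hm :: "vec set"
    and Gp Gm :: "vec \<times> vec \<Rightarrow> vec" and B :: "complex \<Rightarrow> vec \<Rightarrow> vec"
  assumes "contraction T" and "cnu T"
    and "boundary_quadruple T Hp Hm Gp Gm"
    and "weyl_function T Hp Hm Gp Gm B"
  defines "K \<equiv> Kloc T Hp Hm Gp Gm"
  shows
   "(\<forall>l m. cmod l < 1 \<longrightarrow> cmod m < 1 \<longrightarrow> (\<forall>y\<in>Hm.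
        K (Pl, l) (Pl, m) y = vsc (1 / (1 - l * cnj m)) (vsub y (B l (opadj Hp (B m) y))))) \<and>
    (\<forall>l m. cmod l < 1 \<longrightarrow> cmod m < 1 \<longrightarrow> (\<forall>y\<in>Hp.
        K (Mi, l) (Mi, m) y =
          vsc (1 / (1 - l * cnj m)) (vsub y (opadj Hp (B (cnj l)) (B (cnj m) y))))) \<and>
    (\<forall>l m. cmod l < 1 \<longrightarrow> cmod m < 1 \<longrightarrow> l \<noteq> cnj m \<longrightarrow> (\<forall>y\<in>Hp.
        K (Pl, l) (Mi, m) y = vsc (1 / (l - cnj m)) (vsub (B l y) (B (cnj m) y)))) \<and>
    (\<forall>l m. cmod l < 1 \<longrightarrow> cmod m < 1 \<longrightarrow> l = cnj m \<longrightarrow> (\<forall>y\<in>Hp.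
        ((\<lambda>(a, b). l2norm (vsub (vsc (1 / (a - cnj b)) (vsub (B a y) (B (cnj b) y)))
                                 (K (Pl, l) (Mi, m) y)))
          \<longlongrightarrow> 0) (at (l, m) within {(a, b). cmod a < 1 \<and> cmod b < 1 \<and> a \<noteq> cnj b}))) \<and>
    (\<forall>l m. cmod l < 1 \<longrightarrow> cmod m < 1 \<longrightarrow> l \<noteq> cnj m \<longrightarrow> (\<forall>y\<in>Hm.
        K (Mi, l) (Pl, m) y =
          vsc (1 / (l - cnj m)) (vsub (opadj Hp (B (cnj l)) y) (opadj Hp (B m) y)))) \<and>
    (\<forall>l m. cmod l < 1 \<longrightarrow> cmod m < 1 \<longrightarrow> l = cnj m \<longrightarrow> (\<forall>y\<in>Hm.
        ((\<lambda>(a, b). l2norm (vsub (vsc (1 / (a - cnj b))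
                                       (vsub (opadj Hp (B (cnj a)) y) (opadj Hp (B b) y)))
                                 (K (Mi, l) (Pl, m) y)))
          \<longlongrightarrow> 0) (at (l, m) within {(a, b). cmod a < 1 \<and> cmod b < 1 \<and> a \<noteq> cnj b})))"
proof -
  interpret weyl_setting T Hp Hm Gp Gm B
    using assms(3,4) by (rule weyl_setting.intro)
  show ?thesis
    unfolding K_def
    using Kloc_Pl_Pl Kloc_Mi_Mi Kloc_Pl_Mi Kloc_Mi_Pl Kloc_Pl_Mi_limit Kloc_Mi_Pl_limit by blast
qed

end
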